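(* Let $F=\breve F(\alpha_1,\dots,\alpha_t)$ be a fence. A basis of $A_T(F)$ is \[ \mathcal B_A(F)=\bigcup_{i=1}^t\{\alpha_i\chi_x+\chi_{s_{i-1}}+\chi_{s_i}: x\in\breve S_i\}, \] and consequently $\dim A_T(F)=\sum_{i=1}^t(\alpha_i-1)$.
   Context: Fences: let $\alpha=(\alpha_1,\dots,\alpha_t)$ be positive integers with $t\ge2$ and $\alpha_1,\alpha_t\ge2$. Put $a_0=0$, $a_i=\alpha_1+\dots+\alpha_i$, $n=a_t-1$. The fence $\breve F(\alpha)$ is the poset on $\{x_1,\dots,x_n\}$ whose cover relations are: for $1\le j\le n-1$ with $a_{i-1}\le j<a_i$, $x_j\lessdot x_{j+1}$ if $i$ is odd and $x_j\gtrdot x_{j+1}$ if $i$ is even. Segments: $S_1=\{x_j:1\le j\le a_1\}$, $S_i=\{x_j:a_{i-1}\le j\le a_i\}$ for $2\le i\le t-1$, $S_t=\{x_j:a_{t-1}\le j\le n\}$. Shared elements are $s_i=x_{a_i}$, $i\in[t-1]$; $\breve S_i$ is the set of non-shared elements of $S_i$. Convention: $\chi_{s_0}$ and $\chi_{s_t}$ are identically zero. $\mathcal J(F)$ is the set of order ideals. For $q\in F$, $I\in\mathcal J(F)$: $\chi_q(I)=1$ if $q\in\max(I)$, else $0$; $T_q(I)=1$ if $q\in\min(F\setminus I)$, $-1$ if $q\in\max(I)$, $0$ otherwise. For $f:\mathcal J(F)\to\mathbb R$, write $f\equiv\text{const}$ if $f=c+\sum_{q\in F}c_qT_q$ for real constants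 $c,c_q$. $A_T(F)=\{f\in\operatorname{Span}_{\mathbb R}\{\chi_q:q\in F\}: f\equiv\text{const}\}$. *)

theory Defs
  imports "HOL-Analysis.Analysis" "HOL-Library.Function_Algebras"
begin

instantiation "fun" :: (type, real_vector) real_vector
begin
definition scaleR_fun :: "real \<Rightarrow> ('a \<Rightarrow> 'b) \<Rightarrow> 'a \<Rightarrow> 'b"
  where "scaleR_fun c f = (\<lambda>x. c *\<^sub>R f x)"
instance by standard (auto simp: scaleR_fun_def fun_eq_iff algebra_simps)
end

text \<open>The fence \<open>F(\<alpha>)\<close>, \<open>\<alpha> = (\<alpha>_1,...,\<alpha>_t)\<close> given by a function \<open>alpha\<close>
  on \<open>{1..t}\<close>; element \<open>x_j\<close> is represented by the natural number \<open>j\<close>.\<close>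

definition fa :: "(nat \<Rightarrow> nat) \<Rightarrow> nat \<Rightarrow> nat" where
  "fa alpha i = (\<Sum>k=1..i. alpha k)"

definition fn :: "(nat \<Rightarrow> nat) \<Rightarrow> nat \<Rightarrow> nat" where
  "fn alpha t = fa alpha t - 1"

definition fence :: "(nat \<Rightarrow> nat) \<Rightarrow> nat \<Rightarrow> nat set" where
  "fence alpha t = {1..fn alpha t}"

definition fcover :: "(nat \<Rightarrow> nat) \<Rightarrow> nat \<Rightarrow> nat \<Rightarrow> nat \<Rightarrow> bool" where
  "fcover alpha t x y \<longleftrightarrow>
     (\<exists>j i. 1 \<le> j \<and> j < fn alpha t \<and> 1 \<le> i \<and> i \<le> t \<and>
            fa alpha (i - 1) \<le> j \<and> j < fa alpha i \<and>
            ((odd i \<and> x = j \<and> y = j + 1) \<or> (even i \<and> x = j + 1 \<and> y = j)))"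

definition fle :: "(nat \<Rightarrow> nat) \<Rightarrow> nat \<Rightarrow> nat \<Rightarrow> nat \<Rightarrow> bool" where
  "fle alpha t = (fcover alpha t)\<^sup>*\<^sup>*"

definition fless :: "(nat \<Rightarrow> nat) \<Rightarrow> nat \<Rightarrow> nat \<Rightarrow> nat \<Rightarrow> bool" where
  "fless alpha t x y \<longleftrightarrow> fle alpha t x y \<and> x \<noteq> y"

definition ideals :: "(nat \<Rightarrow> nat) \<Rightarrow> nat \<Rightarrow> nat set set" where
  "ideals alpha t = {I. I \<subseteq> fence alpha t \<and>
      (\<forall>x\<in>fence alpha t. \<forall>y\<in>I. fle alpha t x y \<longrightarrow> x \<in> I)}"

definition maxs :: "(nat \<Rightarrow> nat) \<Rightarrow> nat \<Rightarrow> nat set \<Rightarrow> nat set" where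
  "maxs alpha t S = {q\<in>S. \<not> (\<exists>r\<in>S. fless alpha t q r)}"

definition mins :: "(nat \<Rightarrow> nat) \<Rightarrow> nat \<Rightarrow> nat set \<Rightarrow> nat set" where
  "mins alpha t S = {q\<in>S. \<not> (\<exists>r\<in>S. fless alpha t r q)}"

text \<open>Functions on \<open>\<J>(F)\<close> are represented as functions \<open>nat set \<Rightarrow> real\<close>;
  \<open>\<chi>_q\<close> is extended by zero outside \<open>\<J>(F)\<close>.\<close>
definition chi :: "(nat \<Rightarrow> nat) \<Rightarrow> nat \<Rightarrow> nat \<Rightarrow> nat set \<Rightarrow> real" where
  "chi alpha t q I = (if I \<in> ideals alpha t \<and> q \<in> maxs alpha t I then 1 else 0)"

definition toggle :: "(nat \<Rightarrow> nat) \<Rightarrow> nat \<Rightarrow> nat \<Rightarrow> nat set \<Rightarrow> real" where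
  "toggle alpha t q I =
     (if q \<in> mins alpha t (fence alpha t - I) then 1
      else if q \<in> maxs alpha t I then -1 else 0)"

text \<open>\<open>f \<equiv> const\<close> (only values on \<open>\<J>(F)\<close> matter).\<close>
definition equiv_const :: "(nat \<Rightarrow> nat) \<Rightarrow> nat \<Rightarrow> (nat set \<Rightarrow> real) \<Rightarrow> bool" where
  "equiv_const alpha t f \<longleftrightarrow>
     (\<exists>c cq. \<forall>I\<in>ideals alpha t.
        f I = c + (\<Sum>q\<in>fence alpha t. cq q * toggle alpha t q I))"

definition AT :: "(nat \<Rightarrow> nat) \<Rightarrow> nat \<Rightarrow> (nat set \<Rightarrow> real) set" where
  "AT alpha t = {f \<in> span (chi alpha t ` fence alpha t). equiv_const alpha t f}"

text \<open>Shared element \<open>s_i = x_{a_i}\<close>, with the convention that \<open>\<chi>_{s_0} = \<chi>_{s_t} = 0\<close>.\<close>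
definition chi_s :: "(nat \<Rightarrow> nat) \<Rightarrow> nat \<Rightarrow> nat \<Rightarrow> nat set \<Rightarrow> real" where
  "chi_s alpha t i = (if 1 \<le> i \<and> i \<le> t - 1 then chi alpha t (fa alpha i) else (\<lambda>_. 0))"

definition segment :: "(nat \<Rightarrow> nat) \<Rightarrow> nat \<Rightarrow> nat \<Rightarrow> nat set" where
  "segment alpha t i =
     (if i = 1 then {1..fa alpha 1}
      else if i = t then {fa alpha (t - 1)..fn alpha t}
      else {fa alpha (i - 1)..fa alpha i})"

definition shared :: "(nat \<Rightarrow> nat) \<Rightarrow> nat \<Rightarrow> nat set" where
  "shared alpha t = fa alpha ` {1..t - 1}"

definition nonshared :: "(nat \<Rightarrow> nat) \<Rightarrow> nat \<Rightarrow> nat \<Rightarrow> nat set" where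
  "nonshared alpha t i = segment alpha t i - shared alpha t"

definition BA :: "(nat \<Rightarrow> nat) \<Rightarrow> nat \<Rightarrow> (nat set \<Rightarrow> real) set" where
  "BA alpha t = (\<Union>i\<in>{1..t}.
      {real (alpha i) *\<^sub>R chi alpha t x + chi_s alpha t (i - 1) + chi_s alpha t i
        | x. x \<in> nonshared alpha t i})"

end

(*
  Number the elements of a segment S_i from its minimum as positions 0, ..., alpha_i.
  For an interior position, chi and T evaluated at an ideal I are the first and second differences
  of the indicator of I along this chain, so summation by parts writes
  alpha_i chi_x + chi_(s_(i-1)) + chi_(s_i) as 1 plus an explicit combination of toggles.
  Evaluating at the principal ideal of a non-shared x isolates the basis element of x, which gives
  independence.  For spanning, let sum b_q chi_q = c + sum c_q T_q on all ideals: comparing two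
  ideals that differ in a single element yields a linear relation between the coefficients at
  neighbouring elements.  Along a segment these relations form a second order recurrence, which
  identifies the average of b over the non-shared elements of S_i; at a shared element s_i they
  force b(s_i) to be the sum of the averages of the two adjacent segments.  This says precisely
  that sum b_q chi_q is the combination of the basis elements with coefficients b_x / alpha_i.
*)

theory Submission
  imports Defs
begin

lemma fa_0 [simp]: "fa alpha 0 = 0"
  by (simp add: fa_def)

lemma fa_Suc: "fa alpha (Suc i) = fa alpha i + alpha (Suc i)"
  by (simp add: fa_def)

lemma fa_mono: "i \<le> j \<Longrightarrow> fa alpha i \<le> fa alpha j"
  by (induction j) (auto simp: fa_Suc le_Suc_eq)

lemma sum_apply: "(\<Sum>x\<in>A. f x) y = (\<Sum>x\<in>A. f x y)"
  by (induction A rule: infinite_finite_induct) auto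

lemma sum_weight_second_diff:
  fixes M :: "nat \<Rightarrow> real"
  assumes "1 \<le> K"
  shows "(\<Sum>j=1..K. (- real j + (if m < j then A else 0)) * (M (j - 1) - 2 * M j + M (j + 1)))
    = real K * (M K - M (K + 1)) + M K - M 0
      + (if m \<le> K then A * ((M (K + 1) - M K) - (M (m + 1) - M m)) else 0)"
  using assms
proof (induction K)
  case (Suc K)
  show ?case
  proof (cases "K = 0")
    case True
    then show ?thesis
      by (cases "m = 0"; cases "m = 1") (auto simp: algebra_simps)
  next
    case False
    then have "(\<Sum>j=1..K. (- real j + (if m < j then A else 0)) * (M (j - 1) - 2 * M j + M (j + 1)))
      = real K * (M K - M (K + 1)) + M K - M 0
        + (if m \<le> K then A * ((M (K + 1) - M K) - (M (m + 1) - M m)) else 0)"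
      using Suc by simp
    then show ?thesis
      by (cases "m \<le> K"; cases "m = Suc K") (auto simp: algebra_simps)
  qed
qed simp

lemma recurrence_sum_last:
  fixes B C :: "nat \<Rightarrow> real"
  assumes al: "2 \<le> al"
    and rec: "\<And>j. 1 \<le> j \<Longrightarrow> j < al \<Longrightarrow> B j + 2 * C j =
      (if 2 \<le> j then B (j - 1) + C (j - 1) else 0) + (if j + 2 \<le> al then C (j + 1) else 0)"
  shows "(\<Sum>j=1..al - 1. B j) = - (real al * C 1) \<and> B (al - 1) + C (al - 1) = - C 1"
proof -
  have P: "B k + C k - (if k + 2 \<le> al then C (k + 1) else 0) = - C 1 \<and>
      (\<Sum>j=1..k. B j) = - (real (k + 1) * C 1) + (if k + 2 \<le> al then C (k + 1) else 0)"
    if "1 \<le> k" "k < al" for k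
    using that
  proof (induction k)
    case (Suc k)
    show ?case
    proof (cases "k = 0")
      case True
      then show ?thesis
        using rec[of 1] Suc.prems by (auto simp: algebra_simps)
    next
      case False
      then have "B k + C k - C (k + 1) = - C 1 \<and> (\<Sum>j=1..k. B j) = - (real (k + 1) * C 1) + C (k + 1)"
        using Suc by auto
      moreover have "B (Suc k) + 2 * C (Suc k) =
          B k + C k + (if Suc k + 2 \<le> al then C (Suc k + 1) else 0)"
        using rec[of "Suc k"] Suc.prems False by simp
      ultimately show ?thesis
        by (auto simp: algebra_simps)
    qed
  qed simp
  have "1 \<le> al - 1" "al - 1 < al"
    using al by auto
  from P[OF this] show ?thesis
    using al by (simp add: algebra_simps of_nat_diff)
qed

lemma sum_adjacent_pairs:
  fixes s Y :: "nat \<Rightarrow> 'a::comm_semiring_1"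
  assumes "Y 0 = 0" "1 \<le> t"
  shows "(\<Sum>i=1..t. s i * (Y (i - 1) + Y i)) = (\<Sum>k=1..t - 1. (s k + s (k + 1)) * Y k) + s t * Y t"
  using assms(2)
proof (induction t rule: dec_induct)
  case base
  then show ?case
    using assms(1) by simp
next
  case (step t)
  have "(\<Sum>k=1..t. (s k + s (k + 1)) * Y k) = (\<Sum>k=1..t - 1. (s k + s (k + 1)) * Y k) + (s t + s (t + 1)) * Y t"
    using step.hyps(1) by (cases t) (simp_all add: sum.cl_ivl_Suc)
  then show ?case
    using step.IH by (simp add: algebra_simps)
qed

lemma sum_three_support:
  fixes D :: "'a \<Rightarrow> 'b::comm_monoid_add"
  assumes "finite A" "p \<in> A" "distinct [p0, p, p2]" "\<And>q. q \<in> A \<Longrightarrow> q \<notin> {p0, p, p2} \<Longrightarrow> D q = 0"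
  shows "(\<Sum>q\<in>A. D q) = (if p0 \<in> A then D p0 else 0) + D p + (if p2 \<in> A then D p2 else 0)"
proof -
  have "(\<Sum>q\<in>A. D q) = (\<Sum>q\<in>A \<inter> {p0, p, p2}. D q)"
    using assms by (intro sum.mono_neutral_right) auto
  then show ?thesis
    using assms(2,3) by (cases "p0 \<in> A"; cases "p2 \<in> A") (auto simp: Int_insert_right ac_simps)
qed

lemma independent_by_evaluation:
  fixes B :: "('a \<Rightarrow> real) set"
  assumes "\<And>v. v \<in> B \<Longrightarrow> \<exists>p. v p \<noteq> 0 \<and> (\<forall>w\<in>B. w \<noteq> v \<longrightarrow> w p = 0)"
  shows "independent B"
proof
  assume "dependent B"
  then obtain T u v where T: "finite T" "T \<subseteq> B" "(\<Sum>w\<in>T. u w *\<^sub>R w) = 0"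
    and v: "v \<in> T" "u v \<noteq> 0"
    unfolding dependent_explicit by blast
  obtain p where p: "v p \<noteq> 0" "\<forall>w\<in>B. w \<noteq> v \<longrightarrow> w p = 0"
    using assms v(1) T(2) by blast
  have "0 = (\<Sum>w\<in>T. u w *\<^sub>R w) p"
    using T(3) by simp
  also have "\<dots> = (\<Sum>w\<in>T. if w = v then u v * v p else 0)"
    using p(2) T(2) by (auto simp: sum_apply scaleR_fun_def intro!: sum.cong)
  also have "\<dots> = u v * v p"
    using T(1) v(1) by simp
  finally show False
    using v(2) p(1) by simp
qed

lemma span_image_coeffs:
  fixes g :: "'b \<Rightarrow> 'a::real_vector"
  assumes "finite S" "f \<in> span (g ` S)"
  obtains c where "f = (\<Sum>x\<in>S. c x *\<^sub>R g x)"
proof -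
  obtain U where U: "U \<subseteq> S" "inj_on g U" "g ` S = g ` U"
    using subset_image_inj[of "g ` S" g S] by auto
  obtain u where "f = (\<Sum>v\<in>g ` S. u v *\<^sub>R v)"
    using span_finite[of "g ` S"] assms by auto
  also have "\<dots> = (\<Sum>x\<in>U. u (g x) *\<^sub>R g x)"
    using U by (simp add: sum.reindex)
  also have "\<dots> = (\<Sum>x\<in>S. (if x \<in> U then u (g x) else 0) *\<^sub>R g x)"
    using assms(1) U(1) by (intro sum.mono_neutral_cong_left) auto
  finally show ?thesis
    by (rule that)
qed

locale fence_shape =
  fixes alpha :: "nat \<Rightarrow> nat" and t :: nat
  assumes t_ge_2: "t \<ge> 2" and alpha_pos: "\<forall>i\<in>{1..t}. alpha i > 0"
    and alpha_first: "alpha 1 \<ge> 2" and alpha_last: "alpha t \<ge> 2"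
begin

abbreviation a where "a \<equiv> fa alpha"

abbreviation n where "n \<equiv> fn alpha t"

abbreviation F where "F \<equiv> fence alpha t"

lemma fence_eq: "F = {1..n}"
  by (simp add: fence_def)

lemma alpha_gt_0: "1 \<le> i \<Longrightarrow> i \<le> t \<Longrightarrow> alpha i > 0"
  using alpha_pos by auto

lemma a_pred_add: "1 \<le> i \<Longrightarrow> a (i - 1) + alpha i = a i"
  using fa_Suc[of alpha "i - 1"] by simp

lemma a_strict_mono: "i < j \<Longrightarrow> j \<le> t \<Longrightarrow> a i < a j"
proof (induction j)
  case (Suc j)
  have "alpha (Suc j) > 0"
    using Suc.prems by (intro alpha_gt_0) auto
  then show ?case
    using Suc by (cases "i = j") (auto simp: fa_Suc less_Suc_eq)
qed simp

lemma a_first: "a 1 = alpha 1"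
  using fa_Suc[of alpha 0] by simp

lemma a_ge_2: "1 \<le> i \<Longrightarrow> a i \<ge> 2"
  using fa_mono[of 1 i alpha] a_first alpha_first by simp

lemma a_last: "a t = n + 1"
  using fa_mono[of 1 t alpha] t_ge_2 a_first alpha_first by (simp add: fn_def)

lemma a_le_last: "i \<le> t \<Longrightarrow> a i \<le> n + 1"
  using fa_mono[of i t alpha] a_last by simp

lemma a_less_n:
  assumes "1 \<le> i" "i < t"
  shows "a i < n"
proof -
  have "a i \<le> a (t - 1)"
    using assms by (intro fa_mono) simp
  moreover have "a (t - 1) + alpha t = n + 1"
    using a_pred_add[of t] t_ge_2 a_last by simp
  ultimately show ?thesis
    using alpha_last by simp
qed

lemma a_in_fence_iff: "j \<le> t \<Longrightarrow> a j \<in> F \<longleftrightarrow> 1 \<le> j \<and> j < t"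
  using a_last a_less_n[of j] a_ge_2[of j] by (cases "j = 0"; cases "j = t") (auto simp: fence_eq)

lemma inj_on_a: "inj_on a {1..t - 1}"
proof (rule inj_onI)
  fix k l assume "k \<in> {1..t - 1}" "l \<in> {1..t - 1}" "a k = a l"
  then show "k = l"
    using a_strict_mono[of k l] a_strict_mono[of l k] by (cases k l rule: linorder_cases) force+
qed

text \<open>\<open>seg_index j\<close> is the \<open>i\<close> with \<open>a (i - 1) \<le> j < a i\<close>, the segment containing the
  edge between \<open>x_j\<close> and \<open>x_(j+1)\<close>; this edge ascends (\<open>x_j \<lessdot> x_(j+1)\<close>) iff \<open>i\<close> is odd.\<close>

definition seg_index :: "nat \<Rightarrow> nat" where
  "seg_index j = (LEAST i. j < a i)"

lemma seg_index_eqI: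
  assumes "1 \<le> i" "a (i - 1) \<le> j" "j < a i"
  shows "seg_index j = i"
  unfolding seg_index_def
proof (rule Least_equality)
  fix i' assume "j < a i'"
  then show "i \<le> i'"
    using fa_mono[of i' "i - 1" alpha] assms by fastforce
qed fact

lemma seg_index_props:
  assumes "j < a t"
  shows "1 \<le> seg_index j \<and> seg_index j \<le> t \<and> a (seg_index j - 1) \<le> j \<and> j < a (seg_index j)"
proof -
  define i where "i = seg_index j"
  have ji: "j < a i"
    unfolding i_def seg_index_def by (rule LeastI[of _ t]) (rule assms)
  have "i \<le> t"
    unfolding i_def seg_index_def by (rule Least_le) (rule assms)
  moreover have "1 \<le> i"
    using ji by (cases i) auto
  moreover have "a (i - 1) \<le> j"
    using not_less_Least[of "i - 1" "\<lambda>i. j < a i"] \<open>1 \<le> i\<close> by (fold seg_index_def i_def) simp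
  ultimately show ?thesis
    using ji by (simp add: i_def)
qed

definition ascends :: "nat \<Rightarrow> bool" where
  "ascends j \<longleftrightarrow> odd (seg_index j)"

lemma ascends_iff: "1 \<le> i \<Longrightarrow> a (i - 1) \<le> j \<Longrightarrow> j < a i \<Longrightarrow> ascends j \<longleftrightarrow> odd i"
  by (simp add: ascends_def seg_index_eqI)

lemma ascends_before_a:
  assumes "2 \<le> i" "i \<le> t"
  shows "ascends (a (i - 1) - 1) \<longleftrightarrow> even i"
proof -
  have "a (i - 1 - 1) + alpha (i - 1) = a (i - 1)" "alpha (i - 1) > 0"
    using assms a_pred_add[of "i - 1"] alpha_gt_0[of "i - 1"] by auto
  then have "ascends (a (i - 1) - 1) \<longleftrightarrow> odd (i - 1)"
    using assms by (intro ascends_iff) auto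
  then show ?thesis
    using assms by auto
qed

lemma ascends_at_a: "1 \<le> i \<Longrightarrow> i < t \<Longrightarrow> ascends (a i) \<longleftrightarrow> even i"
  using ascends_iff[of "Suc i" "a i"] a_strict_mono[of i "Suc i"] by simp

lemma fcover_iff: "fcover alpha t x y \<longleftrightarrow>
   (1 \<le> x \<and> x < n \<and> ascends x \<and> y = x + 1) \<or> (1 \<le> y \<and> y < n \<and> \<not> ascends y \<and> x = y + 1)"
proof
  assume "fcover alpha t x y"
  then obtain j i where "1 \<le> j" "j < n" "1 \<le> i" "a (i - 1) \<le> j" "j < a i"
     "(odd i \<and> x = j \<and> y = j + 1) \<or> (even i \<and> x = j + 1 \<and> y = j)"
    unfolding fcover_def by blast
  then show "(1 \<le> x \<and> x < n \<and> ascends x \<and> y = x + 1) \<or> (1 \<le> y \<and> y < n \<and> \<not> ascends y \<and> x = y + 1)"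
    using ascends_iff[of i j] by auto
next
  have edge: "fcover alpha t x y"
    if "1 \<le> j" "j < n" "(ascends j \<and> x = j \<and> y = j + 1) \<or> (\<not> ascends j \<and> x = j + 1 \<and> y = j)" for j
    using that seg_index_props[of j] a_last unfolding fcover_def ascends_def
    by (intro exI[of _ j] exI[of _ "seg_index j"]) auto
  assume "(1 \<le> x \<and> x < n \<and> ascends x \<and> y = x + 1) \<or> (1 \<le> y \<and> y < n \<and> \<not> ascends y \<and> x = y + 1)"
  then show "fcover alpha t x y"
    using edge[of x] edge[of y] by blast
qed

lemma fcover_in_fence: "fcover alpha t x y \<Longrightarrow> x \<in> F \<and> y \<in> F"
  by (auto simp: fcover_iff fence_eq)

lemma fcover_fless: "fcover alpha t x y \<Longrightarrow> fless alpha t x y"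
  by (auto simp: fless_def fle_def fcover_iff)

lemma ideals_iff_covers:
  "I \<in> ideals alpha t \<longleftrightarrow> I \<subseteq> F \<and> (\<forall>x y. fcover alpha t x y \<longrightarrow> y \<in> I \<longrightarrow> x \<in> I)"
proof
  assume "I \<in> ideals alpha t"
  then show "I \<subseteq> F \<and> (\<forall>x y. fcover alpha t x y \<longrightarrow> y \<in> I \<longrightarrow> x \<in> I)"
    unfolding ideals_def fle_def using fcover_in_fence by blast
next
  assume h: "I \<subseteq> F \<and> (\<forall>x y. fcover alpha t x y \<longrightarrow> y \<in> I \<longrightarrow> x \<in> I)"
  have "y \<in> I \<longrightarrow> x \<in> I" if "fle alpha t x y" for x y
    using that unfolding fle_def by (induction rule: rtranclp_induct) (use h in blast)+
  with h show "I \<in> ideals alpha t"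
    unfolding ideals_def by blast
qed

lemma ideals_iff_edges: "I \<in> ideals alpha t \<longleftrightarrow> I \<subseteq> F \<and>
   (\<forall>j. 1 \<le> j \<longrightarrow> j < n \<longrightarrow> (ascends j \<longrightarrow> j + 1 \<in> I \<longrightarrow> j \<in> I) \<and> (\<not> ascends j \<longrightarrow> j \<in> I \<longrightarrow> j + 1 \<in> I))"
  unfolding ideals_iff_covers fcover_iff by blast

lemma ideal_subset_fence: "I \<in> ideals alpha t \<Longrightarrow> I \<subseteq> F"
  unfolding ideals_iff_covers by blast

lemma maxs_ideal_iff:
  assumes "I \<in> ideals alpha t"
  shows "q \<in> maxs alpha t I \<longleftrightarrow> q \<in> I \<and> (\<forall>y. fcover alpha t q y \<longrightarrow> y \<notin> I)"
proof
  assume "q \<in> I \<and> (\<forall>y. fcover alpha t q y \<longrightarrow> y \<notin> I)"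
  moreover have "\<not> fless alpha t q r" if "r \<in> I" "\<forall>y. fcover alpha t q y \<longrightarrow> y \<notin> I" for r
  proof
    assume "fless alpha t q r"
    then obtain z where z: "fcover alpha t q z" "(fcover alpha t)\<^sup>*\<^sup>* z r"
      by (metis converse_rtranclpE fle_def fless_def)
    then have "z \<in> I"
      using assms \<open>r \<in> I\<close> fcover_in_fence unfolding ideals_def fle_def by blast
    with that z(1) show False by blast
  qed
  ultimately show "q \<in> maxs alpha t I"
    unfolding maxs_def by blast
qed (auto simp: maxs_def dest: fcover_fless)

lemma mins_compl_iff:
  assumes "I \<in> ideals alpha t"
  shows "q \<in> mins alpha t (F - I) \<longleftrightarrow> q \<in> F \<and> q \<notin> I \<and> (\<forall>x. fcover alpha t x q \<longrightarrow> x \<in> I)"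
proof
  assume h: "q \<in> F \<and> q \<notin> I \<and> (\<forall>x. fcover alpha t x q \<longrightarrow> x \<in> I)"
  have "\<not> fless alpha t r q" if "r \<in> F - I" for r
  proof
    assume "fless alpha t r q"
    then obtain z where z: "(fcover alpha t)\<^sup>*\<^sup>* r z" "fcover alpha t z q"
      by (metis rtranclp.cases fle_def fless_def)
    then have "r \<in> I"
      using h assms that unfolding ideals_def fle_def by blast
    with that show False by blast
  qed
  with h show "q \<in> mins alpha t (F - I)"
    unfolding mins_def by blast
qed (auto simp: mins_def dest: fcover_fless fcover_in_fence)

lemma fcover_from_iff:
  assumes "q \<in> F"
  shows "fcover alpha t q y \<longleftrightarrow>
    (q < n \<and> ascends q \<and> y = q + 1) \<or> (2 \<le> q \<and> \<not> ascends (q - 1) \<and> y = q - 1)"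
  using assms by (auto simp: fcover_iff fence_eq)

lemma fcover_to_iff:
  assumes "q \<in> F"
  shows "fcover alpha t x q \<longleftrightarrow>
    (q < n \<and> \<not> ascends q \<and> x = q + 1) \<or> (2 \<le> q \<and> ascends (q - 1) \<and> x = q - 1)"
  using assms by (auto simp: fcover_iff fence_eq)

lemma maxs_local:
  assumes "I \<in> ideals alpha t" "q \<in> F"
  shows "q \<in> maxs alpha t I \<longleftrightarrow>
    q \<in> I \<and> \<not> (q < n \<and> ascends q \<and> q + 1 \<in> I) \<and> \<not> (2 \<le> q \<and> \<not> ascends (q - 1) \<and> q - 1 \<in> I)"
  unfolding maxs_ideal_iff[OF assms(1)] fcover_from_iff[OF assms(2)] by blast

lemma mins_compl_local:
  assumes "I \<in> ideals alpha t" "q \<in> F"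
  shows "q \<in> mins alpha t (F - I) \<longleftrightarrow>
    q \<notin> I \<and> (q < n \<and> \<not> ascends q \<longrightarrow> q + 1 \<in> I) \<and> (2 \<le> q \<and> ascends (q - 1) \<longrightarrow> q - 1 \<in> I)"
  unfolding mins_compl_iff[OF assms(1)] fcover_to_iff[OF assms(2)] using assms(2) by blast

lemma chi_local:
  assumes "I \<in> ideals alpha t" "q \<in> F"
  shows "chi alpha t q I = (if q \<in> I \<and> \<not> (q < n \<and> ascends q \<and> q + 1 \<in> I)
                                   \<and> \<not> (2 \<le> q \<and> \<not> ascends (q - 1) \<and> q - 1 \<in> I) then 1 else 0)"
  using maxs_local[OF assms] assms(1) by (simp add: chi_def)

lemma toggle_local:
  assumes "I \<in> ideals alpha t" "q \<in> F"
  shows "toggle alpha t q I =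
    (if q \<notin> I \<and> (q < n \<and> \<not> ascends q \<longrightarrow> q + 1 \<in> I) \<and> (2 \<le> q \<and> ascends (q - 1) \<longrightarrow> q - 1 \<in> I) then 1
     else if q \<in> I \<and> \<not> (q < n \<and> ascends q \<and> q + 1 \<in> I)
                  \<and> \<not> (2 \<le> q \<and> \<not> ascends (q - 1) \<and> q - 1 \<in> I) then -1 else 0)"
  using maxs_local[OF assms] mins_compl_local[OF assms] by (simp add: toggle_def)

lemma chi_toggle_local_eq:
  assumes "I1 \<in> ideals alpha t" "I2 \<in> ideals alpha t" "q \<in> F"
    and "\<And>p. q - 1 \<le> p \<Longrightarrow> p \<le> q + 1 \<Longrightarrow> p \<in> I1 \<longleftrightarrow> p \<in> I2"
  shows "chi alpha t q I1 = chi alpha t q I2 \<and> toggle alpha t q I1 = toggle alpha t q I2"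
proof -
  have "q \<in> I1 \<longleftrightarrow> q \<in> I2" "q + 1 \<in> I1 \<longleftrightarrow> q + 1 \<in> I2" "q - 1 \<in> I1 \<longleftrightarrow> q - 1 \<in> I2"
    using assms(4) by auto
  then show ?thesis
    unfolding chi_local[OF assms(1,3)] chi_local[OF assms(2,3)]
      toggle_local[OF assms(1,3)] toggle_local[OF assms(2,3)] by simp
qed

lemma interval_ideal:
  assumes "1 \<le> p" "q \<le> n"
    and "2 \<le> p \<Longrightarrow> p \<le> q \<Longrightarrow> \<not> ascends (p - 1)" "p \<le> q \<Longrightarrow> q < n \<Longrightarrow> ascends q"
  shows "{p..q} \<in> ideals alpha t"
  unfolding ideals_iff_edges
proof (intro conjI allI impI)
  show "{p..q} \<subseteq> F"
    using assms(1,2) by (auto simp: fence_eq)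
  fix j assume j: "1 \<le> j" "j < n"
  show "j + 1 \<in> {p..q} \<Longrightarrow> j \<in> {p..q}" if "ascends j"
    using that assms(3) j by (cases "j + 1 = p") auto
  show "j \<in> {p..q} \<Longrightarrow> j + 1 \<in> {p..q}" if "\<not> ascends j"
    using that assms(4) j by (cases "j = q") auto
qed

lemma ideal_Un: "I \<in> ideals alpha t \<Longrightarrow> J \<in> ideals alpha t \<Longrightarrow> I \<union> J \<in> ideals alpha t"
  unfolding ideals_iff_covers by blast

lemma empty_ideal: "{} \<in> ideals alpha t"
  unfolding ideals_iff_covers by blast

lemma fence_ideal: "F \<in> ideals alpha t"
  unfolding ideals_iff_covers using fcover_in_fence by blast

lemma fence_minus_max_ideal:
  assumes "s \<in> F" "s < n \<Longrightarrow> \<not> ascends s" "2 \<le> s \<Longrightarrow> ascends (s - 1)"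
  shows "F - {s} \<in> ideals alpha t"
  unfolding ideals_iff_edges
proof (intro conjI allI impI)
  fix j assume j: "1 \<le> j" "j < n"
  show "j + 1 \<in> F - {s} \<Longrightarrow> j \<in> F - {s}" if "ascends j"
    using that assms(2) j by (cases "j = s") (auto simp: fence_eq)
  show "j \<in> F - {s} \<Longrightarrow> j + 1 \<in> F - {s}" if "\<not> ascends j"
    using that assms(3) j by (cases "j + 1 = s") (auto simp: fence_eq)
qed blast

text \<open>\<open>seg_pos i j\<close> is the element of \<open>S_i\<close> at height \<open>j\<close> above the minimum of \<open>S_i\<close>,
  for \<open>j \<le> alpha i\<close>; at the two ends of the fence it may be \<open>0\<close> or \<open>n + 1\<close>, outside \<open>F\<close>.\<close>

definition seg_pos :: "nat \<Rightarrow> nat \<Rightarrow> nat" where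
  "seg_pos i j = (if odd i then a (i - 1) + j else a i - j)"

definition seg_offset :: "nat \<Rightarrow> nat \<Rightarrow> nat" where
  "seg_offset i q = (if odd i then q - a (i - 1) else a i - q)"

abbreviation inner :: "nat \<Rightarrow> nat set" where
  "inner i \<equiv> {a (i - 1) + 1..<a i}"

lemma seg_pos_bounds:
  "1 \<le> i \<Longrightarrow> j \<le> alpha i \<Longrightarrow> a (i - 1) \<le> seg_pos i j \<and> seg_pos i j \<le> a i"
  using a_pred_add[of i] by (auto simp: seg_pos_def)

lemma seg_offset_seg_pos [simp]: "1 \<le> i \<Longrightarrow> j \<le> alpha i \<Longrightarrow> seg_offset i (seg_pos i j) = j"
  using a_pred_add[of i] by (auto simp: seg_pos_def seg_offset_def)

lemma seg_pos_seg_offset: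
  "1 \<le> i \<Longrightarrow> a (i - 1) \<le> q \<Longrightarrow> q \<le> a i \<Longrightarrow> seg_pos i (seg_offset i q) = q \<and> seg_offset i q \<le> alpha i"
  using a_pred_add[of i] by (auto simp: seg_pos_def seg_offset_def)

lemma seg_pos_eq_iff:
  "1 \<le> i \<Longrightarrow> j \<le> alpha i \<Longrightarrow> k \<le> alpha i \<Longrightarrow> seg_pos i j = seg_pos i k \<longleftrightarrow> j = k"
  by (metis seg_offset_seg_pos)

lemma bij_betw_seg_pos: "1 \<le> i \<Longrightarrow> bij_betw (seg_pos i) {0..alpha i} {a (i - 1)..a i}"
  by (rule bij_betw_byWitness[where f' = "seg_offset i"])
     (use seg_pos_bounds seg_pos_seg_offset in auto)

lemma bij_betw_seg_pos_inner: "1 \<le> i \<Longrightarrow> bij_betw (seg_pos i) {1..<alpha i} (inner i)"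
  by (rule bij_betw_byWitness[where f' = "seg_offset i"])
     (use a_pred_add[of i] in \<open>auto simp: seg_pos_def seg_offset_def\<close>)

lemma inner_subset_fence: "i \<le> t \<Longrightarrow> inner i \<subseteq> F"
  using a_le_last[of i] by (auto simp: fence_eq)

lemma seg_pos_inner: "1 \<le> i \<Longrightarrow> 1 \<le> j \<Longrightarrow> j < alpha i \<Longrightarrow> seg_pos i j \<in> inner i"
  using bij_betw_apply[OF bij_betw_seg_pos_inner] by auto

lemma seg_pos_in_fence: "1 \<le> i \<Longrightarrow> i \<le> t \<Longrightarrow> 1 \<le> j \<Longrightarrow> j < alpha i \<Longrightarrow> seg_pos i j \<in> F"
  using seg_pos_inner inner_subset_fence by blast

lemma ascends_seg_pos:
  assumes "1 \<le> i" "i \<le> t" "j < alpha i"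
  shows "ascends (if odd i then seg_pos i j else seg_pos i (j + 1)) \<longleftrightarrow> odd i"
  using assms a_pred_add[of i] by (intro ascends_iff) (auto simp: seg_pos_def)

lemma fcover_seg_pos:
  assumes "1 \<le> i" "i \<le> t" "j < alpha i" "seg_pos i j \<in> F" "seg_pos i (j + 1) \<in> F"
  shows "fcover alpha t (seg_pos i j) (seg_pos i (j + 1))"
  using ascends_seg_pos[OF assms(1-3)] assms(3-5) a_pred_add[of i] assms(1)
  by (auto simp: fcover_iff seg_pos_def fence_eq)

lemma fcover_seg_interior_iff:
  assumes "1 \<le> i" "i \<le> t" "1 \<le> j" "j < alpha i"
  shows "fcover alpha t (seg_pos i j) y \<longleftrightarrow> y = seg_pos i (j + 1) \<and> y \<in> F"
    and "fcover alpha t x (seg_pos i j) \<longleftrightarrow> x = seg_pos i (j - 1) \<and> x \<in> F"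
proof -
  have q: "seg_pos i j \<in> F"
    using seg_pos_in_fence assms by blast
  have asc: "ascends (seg_pos i j) \<longleftrightarrow> odd i" "ascends (seg_pos i j - 1) \<longleftrightarrow> odd i"
    using assms a_pred_add[OF assms(1)] by (intro ascends_iff; auto simp: seg_pos_def)+
  have pos: "seg_pos i (j + 1) = (if odd i then seg_pos i j + 1 else seg_pos i j - 1)"
    "seg_pos i (j - 1) = (if odd i then seg_pos i j - 1 else seg_pos i j + 1)"
    using assms a_pred_add[OF assms(1)] by (auto simp: seg_pos_def)
  have "1 \<le> seg_pos i j" "seg_pos i j \<le> n"
    using q by (simp_all add: fence_eq)
  then show "fcover alpha t (seg_pos i j) y \<longleftrightarrow> y = seg_pos i (j + 1) \<and> y \<in> F"
    and "fcover alpha t x (seg_pos i j) \<longleftrightarrow> x = seg_pos i (j - 1) \<and> x \<in> F"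
    unfolding fcover_from_iff[OF q] fcover_to_iff[OF q] pos using asc by (auto simp: fence_eq)
qed

lemma no_fcover_below_seg_bottom:
  assumes "1 \<le> i" "i \<le> t" "seg_pos i 0 \<in> F"
  shows "\<not> fcover alpha t x (seg_pos i 0)"
proof (cases "odd i")
  case True
  then have "2 \<le> i"
    using assms by (cases "i = 1") (auto simp: seg_pos_def fence_eq)
  then have "\<not> ascends (a (i - 1) - 1)"
    using ascends_before_a[of i] True assms by auto
  moreover have "ascends (a (i - 1))"
    using True assms a_strict_mono[of "i - 1" i] ascends_iff[of i "a (i - 1)"] by auto
  ultimately show ?thesis
    using True assms by (auto simp: fcover_to_iff seg_pos_def fence_eq)
next
  case False
  then have "a i < n \<Longrightarrow> ascends (a i)"
    using ascends_at_a[of i] assms a_last by (cases "i = t") auto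
  moreover have "\<not> ascends (a i - 1)"
    using False assms a_pred_add[of i] alpha_gt_0[of i] by (subst ascends_iff[of i]) auto
  ultimately show ?thesis
    using False assms by (auto simp: fcover_to_iff seg_pos_def fence_eq)
qed

lemma no_fcover_above_seg_top:
  assumes "1 \<le> i" "i \<le> t" "seg_pos i (alpha i) \<in> F"
  shows "\<not> fcover alpha t (seg_pos i (alpha i)) y"
proof (cases "odd i")
  case True
  then have "seg_pos i (alpha i) = a i"
    using a_pred_add[of i] assms by (simp add: seg_pos_def)
  moreover have "a i < n \<Longrightarrow> \<not> ascends (a i)"
    using ascends_at_a[of i] True assms a_last by (cases "i = t") auto
  moreover have "ascends (a i - 1)"
    using True assms a_pred_add[of i] alpha_gt_0[of i] by (subst ascends_iff[of i]) auto
  ultimately show ?thesis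
    using assms by (auto simp: fcover_from_iff)
next
  case False
  then have "seg_pos i (alpha i) = a (i - 1)" "2 \<le> i"
    using a_pred_add[of i] assms by (auto simp: seg_pos_def)
  moreover have "ascends (a (i - 1) - 1)"
    using ascends_before_a[of i] False assms \<open>2 \<le> i\<close> by auto
  moreover have "\<not> ascends (a (i - 1))"
    using False assms a_strict_mono[of "i - 1" i] by (subst ascends_iff[of i]) auto
  ultimately show ?thesis
    using assms by (auto simp: fcover_from_iff)
qed

text \<open>An end of \<open>S_i\<close> outside the fence counts as belonging to \<open>I\<close> at the bottom and not at
  the top, which keeps the formulas below uniform.\<close>

definition seg_mem :: "nat set \<Rightarrow> nat \<Rightarrow> nat \<Rightarrow> real" where
  "seg_mem I i j = (if seg_pos i j \<in> F then of_bool (seg_pos i j \<in> I) else of_bool (j = 0))"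

lemma chi_toggle_seg_interior:
  assumes I: "I \<in> ideals alpha t" and i: "1 \<le> i" "i \<le> t" and j: "1 \<le> j" "j < alpha i"
  shows "chi alpha t (seg_pos i j) I = seg_mem I i j - seg_mem I i (j + 1)"
    and "toggle alpha t (seg_pos i j) I =
      seg_mem I i (j - 1) - 2 * seg_mem I i j + seg_mem I i (j + 1)"
proof -
  note covers = fcover_seg_interior_iff[OF i j]
  have q: "seg_pos i j \<in> F"
    using seg_pos_in_fence i j by blast
  have closed: "fcover alpha t x y \<Longrightarrow> y \<in> I \<Longrightarrow> x \<in> I" for x y
    using I unfolding ideals_iff_covers by blast
  have up: "seg_pos i (j + 1) \<in> I \<Longrightarrow> seg_pos i j \<in> I"
    using closed[of "seg_pos i j" "seg_pos i (j + 1)"] covers(1) ideal_subset_fence[OF I] by auto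
  have down: "seg_pos i j \<in> I \<Longrightarrow> seg_pos i (j - 1) \<in> F \<Longrightarrow> seg_pos i (j - 1) \<in> I"
    using closed[of "seg_pos i (j - 1)" "seg_pos i j"] covers(2) by auto
  have max: "seg_pos i j \<in> maxs alpha t I \<longleftrightarrow> seg_pos i j \<in> I \<and> seg_pos i (j + 1) \<notin> I"
    unfolding maxs_ideal_iff[OF I] covers(1) using ideal_subset_fence[OF I] by blast
  have min: "seg_pos i j \<in> mins alpha t (F - I) \<longleftrightarrow>
      seg_pos i j \<notin> I \<and> (seg_pos i (j - 1) \<in> F \<longrightarrow> seg_pos i (j - 1) \<in> I)"
    unfolding mins_compl_iff[OF I] covers(2) using q by blast
  have "seg_pos i (j - 1) \<notin> F \<Longrightarrow> j - 1 = 0"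
    using seg_pos_in_fence[OF i, of "j - 1"] j by force
  then have M_prev: "seg_mem I i (j - 1) =
      (if seg_pos i (j - 1) \<in> F \<longrightarrow> seg_pos i (j - 1) \<in> I then 1 else 0)"
    by (auto simp: seg_mem_def)
  have M: "seg_mem I i j = (if seg_pos i j \<in> I then 1 else 0)"
    using q by (simp add: seg_mem_def)
  have M_next: "seg_mem I i (j + 1) = (if seg_pos i (j + 1) \<in> I then 1 else 0)"
    using ideal_subset_fence[OF I] by (auto simp: seg_mem_def)
  show "chi alpha t (seg_pos i j) I = seg_mem I i j - seg_mem I i (j + 1)"
    unfolding M M_next using I up max by (auto simp: chi_def)
  show "toggle alpha t (seg_pos i j) I =
      seg_mem I i (j - 1) - 2 * seg_mem I i j + seg_mem I i (j + 1)"
    unfolding M_prev M M_next using up down max min by (cases "seg_pos i j \<in> I") (auto simp: toggle_def)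
qed

lemma toggle_seg_bottom:
  assumes I: "I \<in> ideals alpha t" and i: "1 \<le> i" "i \<le> t" and bot: "seg_pos i 0 \<in> F"
  shows "toggle alpha t (seg_pos i 0) I = 1 - seg_mem I i 0 - chi alpha t (seg_pos i 0) I"
  using mins_compl_iff[OF I] maxs_ideal_iff[OF I] no_fcover_below_seg_bottom[OF i bot] bot I
  by (auto simp: toggle_def chi_def seg_mem_def)

lemma chi_seg_top:
  assumes I: "I \<in> ideals alpha t" and i: "1 \<le> i" "i \<le> t" and top: "seg_pos i (alpha i) \<in> F"
  shows "chi alpha t (seg_pos i (alpha i)) I = seg_mem I i (alpha i)"
  using maxs_ideal_iff[OF I] no_fcover_above_seg_top[OF i top] top I
  by (auto simp: chi_def seg_mem_def)

lemma segment_eq: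
  assumes "1 \<le> i" "i \<le> t"
  shows "segment alpha t i = {a (i - 1)..a i} \<inter> F"
proof -
  have "i \<noteq> 1 \<Longrightarrow> 2 \<le> a (i - 1)" "i \<noteq> t \<Longrightarrow> a i < n"
    using assms a_ge_2[of "i - 1"] a_less_n[of i] by auto
  then show ?thesis
    using assms t_ge_2 a_last a_first by (auto simp: segment_def fence_eq)
qed

lemma a_notin_inner:
  assumes "x \<in> inner i"
  shows "a k \<noteq> x"
proof (cases "k < i")
  case True
  then have "a k \<le> a (i - 1)"
    by (intro fa_mono) simp
  then show ?thesis
    using assms by simp
next
  case False
  then have "a i \<le> a k"
    by (intro fa_mono) simp
  then show ?thesis
    using assms by simp
qed

lemma nonshared_eq:
  assumes i: "1 \<le> i" "i \<le> t"
  shows "nonshared alpha t i = inner i"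
proof -
  have "{a (i - 1)..a i} \<inter> F - a ` {1..t - 1} \<subseteq> inner i"
  proof
    fix x assume x: "x \<in> {a (i - 1)..a i} \<inter> F - a ` {1..t - 1}"
    then have "x \<noteq> a (i - 1)" "x \<noteq> a i"
      using a_in_fence_iff[of "i - 1"] a_in_fence_iff[of i] i by auto
    with x show "x \<in> inner i"
      by auto
  qed
  moreover have "inner i \<subseteq> {a (i - 1)..a i} \<inter> F - a ` {1..t - 1}"
    using inner_subset_fence[OF i(2)] a_notin_inner by fastforce
  ultimately show ?thesis
    unfolding nonshared_def segment_eq[OF i] shared_def by blast
qed

lemma inner_disjoint: "x \<in> inner i \<Longrightarrow> x \<in> inner i' \<Longrightarrow> 1 \<le> i \<Longrightarrow> 1 \<le> i' \<Longrightarrow> i = i'"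
  using seg_index_eqI[of i x] seg_index_eqI[of i' x] by auto

text \<open>For \<open>1 \<le> m < alpha i\<close>, the basis element built on \<open>seg_pos i m\<close> equals
  \<open>1 + \<Sum>\<^sub>q c\<^sub>q T\<^sub>q\<close> with \<open>c\<^sub>q\<close> supported on \<open>S_i\<close>: at height \<open>j\<close> it is
  \<open>-1\<close> for \<open>j = 0\<close>, \<open>-j\<close> for \<open>1 \<le> j \<le> m\<close> and \<open>alpha i - j\<close> above \<open>m\<close>.\<close>

definition toggle_weight :: "nat \<Rightarrow> nat \<Rightarrow> nat \<Rightarrow> real" where
  "toggle_weight i m j = (if j = 0 then -1 else - real j + (if m < j then real (alpha i) else 0))"

definition basis_toggle_coeff :: "nat \<Rightarrow> nat \<Rightarrow> nat \<Rightarrow> real" where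
  "basis_toggle_coeff i m q =
     (if a (i - 1) \<le> q \<and> q \<le> a i then toggle_weight i m (seg_offset i q) else 0)"

lemma sum_basis_toggle_coeff:
  assumes "1 \<le> i"
  shows "(\<Sum>q\<in>F. basis_toggle_coeff i m q * g q) =
    (\<Sum>j=0..alpha i. if seg_pos i j \<in> F then toggle_weight i m j * g (seg_pos i j) else 0)"
proof -
  have "(\<Sum>q\<in>F. basis_toggle_coeff i m q * g q) =
      (\<Sum>q\<in>F \<inter> {a (i - 1)..a i}. basis_toggle_coeff i m q * g q)"
    by (rule sum.mono_neutral_right) (auto simp: fence_eq basis_toggle_coeff_def)
  also have "\<dots> = (\<Sum>q\<in>{a (i - 1)..a i}. if q \<in> F then basis_toggle_coeff i m q * g q else 0)"
    using sum.inter_restrict[of "{a (i - 1)..a i}" "\<lambda>q. basis_toggle_coeff i m q * g q" F]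
    by (simp add: Int_commute)
  also have "\<dots> = (\<Sum>j=0..alpha i. if seg_pos i j \<in> F then
                      basis_toggle_coeff i m (seg_pos i j) * g (seg_pos i j) else 0)"
    using sum.reindex_bij_betw[OF bij_betw_seg_pos[OF assms],
        of "\<lambda>q. if q \<in> F then basis_toggle_coeff i m q * g q else 0"] by simp
  also have "\<dots> = (\<Sum>j=0..alpha i. if seg_pos i j \<in> F then toggle_weight i m j * g (seg_pos i j) else 0)"
    using seg_pos_bounds[OF assms] assms by (intro sum.cong) (auto simp: basis_toggle_coeff_def)
  finally show ?thesis .
qed

lemma toggle_sum_basis_coeff:
  assumes I: "I \<in> ideals alpha t" and i: "1 \<le> i" "i \<le> t" and m: "m < alpha i"
  shows "(\<Sum>q\<in>F. basis_toggle_coeff i m q * toggle alpha t q I) =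
    (if seg_pos i 0 \<in> F then seg_mem I i 0 + chi alpha t (seg_pos i 0) I - 1 else 0) +
    (\<Sum>j=1..alpha i - 1. (- real j + (if m < j then real (alpha i) else 0)) *
        (seg_mem I i (j - 1) - 2 * seg_mem I i j + seg_mem I i (j + 1)))"
proof -
  define h where "h j = (if seg_pos i j \<in> F then
      toggle_weight i m j * toggle alpha t (seg_pos i j) I else 0)" for j
  have "(\<Sum>j=0..alpha i. h j) = h 0 + (\<Sum>j=1..alpha i - 1. h j) + h (alpha i)"
    using m sum.atLeast_Suc_atMost[of 0 "alpha i" h] sum.cl_ivl_Suc[of h 1 "alpha i - 1"]
    by (simp add: Suc_leI)
  moreover have "h (alpha i) = 0"
    using m by (simp add: h_def toggle_weight_def)
  moreover have "h 0 = (if seg_pos i 0 \<in> F then seg_mem I i 0 + chi alpha t (seg_pos i 0) I - 1 else 0)"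
    using toggle_seg_bottom[OF I i] by (simp add: h_def toggle_weight_def)
  moreover have "h j = (- real j + (if m < j then real (alpha i) else 0)) *
      (seg_mem I i (j - 1) - 2 * seg_mem I i j + seg_mem I i (j + 1))" if "j \<in> {1..alpha i - 1}" for j
  proof -
    have "1 \<le> j" "j < alpha i"
      using that m by auto
    then show ?thesis
      using chi_toggle_seg_interior(2)[OF I i] seg_pos_in_fence[OF i] by (simp add: h_def toggle_weight_def)
  qed
  ultimately show ?thesis
    using sum_basis_toggle_coeff[OF i(1)] by (simp add: h_def[symmetric])
qed

lemma chi_s_seg_ends:
  assumes "1 \<le> i" "i \<le> t"
  shows "chi_s alpha t (i - 1) I + chi_s alpha t i I =
    (if seg_pos i 0 \<in> F then chi alpha t (seg_pos i 0) I else 0) +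
    (if seg_pos i (alpha i) \<in> F then chi alpha t (seg_pos i (alpha i)) I else 0)"
proof -
  have "a (i - 1) \<in> F \<longleftrightarrow> 1 \<le> i - 1 \<and> i - 1 \<le> t - 1" "a i \<in> F \<longleftrightarrow> 1 \<le> i \<and> i \<le> t - 1"
    using a_in_fence_iff[of "i - 1"] a_in_fence_iff[of i] assms by auto
  moreover have "seg_pos i 0 = (if odd i then a (i - 1) else a i)"
    "seg_pos i (alpha i) = (if odd i then a i else a (i - 1))"
    using a_pred_add[of i] assms by (auto simp: seg_pos_def)
  ultimately show ?thesis
    using assms by (auto simp: chi_s_def)
qed

definition basis_elem :: "nat \<Rightarrow> nat \<Rightarrow> nat set \<Rightarrow> real" where
  "basis_elem i x = real (alpha i) *\<^sub>R chi alpha t x + chi_s alpha t (i - 1) + chi_s alpha t i"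

lemma basis_elem_toggle_expansion:
  assumes I: "I \<in> ideals alpha t" and i: "1 \<le> i" "i \<le> t" and m: "1 \<le> m" "m < alpha i"
  shows "basis_elem i (seg_pos i m) I = 1 + (\<Sum>q\<in>F. basis_toggle_coeff i m q * toggle alpha t q I)"
proof -
  define M where "M = seg_mem I i"
  define al where "al = alpha i"
  define S where "S = (\<Sum>j=1..al - 1. (- real j + (if m < j then real al else 0)) *
        (M (j - 1) - 2 * M j + M (j + 1)))"
  have "basis_elem i (seg_pos i m) I = real al * (M m - M (m + 1)) +
      (if seg_pos i 0 \<in> F then chi alpha t (seg_pos i 0) I else 0) +
      (if seg_pos i al \<in> F then M al else 0)"
    using chi_toggle_seg_interior(1)[OF I i m] chi_s_seg_ends[OF i, of I] chi_seg_top[OF I i]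
    by (simp add: basis_elem_def scaleR_fun_def M_def al_def)
  moreover have "(\<Sum>q\<in>F. basis_toggle_coeff i m q * toggle alpha t q I) =
      (if seg_pos i 0 \<in> F then M 0 + chi alpha t (seg_pos i 0) I - 1 else 0) + S"
    unfolding S_def M_def al_def by (rule toggle_sum_basis_coeff[OF I i m(2)])
  moreover have "S = (real al - 1) * (M (al - 1) - M al) + M (al - 1) - M 0 +
      real al * ((M al - M (al - 1)) - (M (m + 1) - M m))"
  proof -
    have "1 \<le> al - 1" "m \<le> al - 1" "al - 1 + 1 = al" "real (al - 1) = real al - 1"
      using m by (auto simp: al_def)
    then show ?thesis
      using sum_weight_second_diff[of "al - 1" m "real al" M] by (simp add: S_def)
  qed
  moreover have "seg_pos i 0 \<notin> F \<Longrightarrow> M 0 = 1" "seg_pos i al \<notin> F \<Longrightarrow> M al = 0"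
    using m by (auto simp: M_def al_def seg_mem_def)
  ultimately show ?thesis
    by (cases "seg_pos i 0 \<in> F"; cases "seg_pos i al \<in> F") (simp_all add: algebra_simps)
qed

lemma BA_eq: "BA alpha t = (\<Union>i\<in>{1..t}. basis_elem i ` inner i)"
  unfolding BA_def basis_elem_def using nonshared_eq by (auto intro!: SUP_cong)

lemma chi_s_in_span: "chi_s alpha t k \<in> span (chi alpha t ` F)"
  using a_in_fence_iff[of k]
  by (auto simp: chi_s_def span_base span_zero zero_fun_def[symmetric])

lemma basis_elem_in_AT:
  assumes i: "1 \<le> i" "i \<le> t" and x: "x \<in> inner i"
  shows "basis_elem i x \<in> AT alpha t"
proof -
  have "basis_elem i x \<in> span (chi alpha t ` F)"
    unfolding basis_elem_def using x inner_subset_fence[OF i(2)]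
    by (intro span_add span_scale span_base chi_s_in_span) auto
  moreover have "x \<in> seg_pos i ` {1..<alpha i}"
    using x bij_betw_imp_surj_on[OF bij_betw_seg_pos_inner[OF i(1)]] by simp
  then obtain m where "x = seg_pos i m" "1 \<le> m" "m < alpha i"
    by auto
  then have "equiv_const alpha t (basis_elem i x)"
    unfolding equiv_const_def using basis_elem_toggle_expansion[OF _ i] by blast
  ultimately show ?thesis
    by (simp add: AT_def)
qed

lemma subspace_equiv_const: "subspace {f. equiv_const alpha t f}"
  unfolding subspace_def
proof (intro conjI ballI allI)
  show "0 \<in> {f. equiv_const alpha t f}"
    unfolding equiv_const_def by (auto intro!: exI[of _ 0] exI[of _ "\<lambda>_. 0"])
next
  fix f g assume "f \<in> {f. equiv_const alpha t f}" "g \<in> {f. equiv_const alpha t f}"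
  then obtain c1 cq1 c2 cq2
    where "\<forall>I\<in>ideals alpha t. f I = c1 + (\<Sum>q\<in>F. cq1 q * toggle alpha t q I)"
      and "\<forall>I\<in>ideals alpha t. g I = c2 + (\<Sum>q\<in>F. cq2 q * toggle alpha t q I)"
    unfolding equiv_const_def by auto
  then show "f + g \<in> {f. equiv_const alpha t f}"
    unfolding equiv_const_def
    by (auto intro!: exI[of _ "c1 + c2"] exI[of _ "\<lambda>q. cq1 q + cq2 q"] simp: distrib_right sum.distrib)
next
  fix r :: real and f assume "f \<in> {f. equiv_const alpha t f}"
  then obtain c cq where "\<forall>I\<in>ideals alpha t. f I = c + (\<Sum>q\<in>F. cq q * toggle alpha t q I)"
    unfolding equiv_const_def by auto
  then show "r *\<^sub>R f \<in> {f. equiv_const alpha t f}"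
    unfolding equiv_const_def
    by (auto intro!: exI[of _ "r * c"] exI[of _ "\<lambda>q. r * cq q"]
        simp: scaleR_fun_def distrib_left sum_distrib_left mult.assoc)
qed

lemma subspace_AT: "subspace (AT alpha t)"
proof -
  have "AT alpha t = span (chi alpha t ` F) \<inter> {f. equiv_const alpha t f}"
    by (auto simp: AT_def)
  then show ?thesis
    using subspace_inter[OF subspace_span subspace_equiv_const] by simp
qed

lemma span_BA_subset_AT: "span (BA alpha t) \<subseteq> AT alpha t"
  using basis_elem_in_AT subspace_AT by (intro span_minimal) (auto simp: BA_eq)

definition seg_ideal :: "nat \<Rightarrow> nat \<Rightarrow> nat set" where
  "seg_ideal i j = seg_pos i ` {0..j} \<inter> F"

lemma seg_ideal_in_ideals:
  assumes i: "1 \<le> i" "i \<le> t" and j: "j < alpha i"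
  shows "seg_ideal i j \<in> ideals alpha t"
  unfolding ideals_iff_covers
proof (intro conjI allI impI)
  fix x y assume cov: "fcover alpha t x y" and y: "y \<in> seg_ideal i j"
  then obtain k where k: "k \<le> j" "y = seg_pos i k" "y \<in> F"
    by (auto simp: seg_ideal_def)
  then have "k \<noteq> 0"
    using no_fcover_below_seg_bottom[OF i] cov by (cases "k = 0") auto
  then have "x = seg_pos i (k - 1)" "x \<in> F"
    using fcover_seg_interior_iff(2)[OF i, of k x] cov k j by auto
  then show "x \<in> seg_ideal i j"
    unfolding seg_ideal_def using k by (intro IntI rev_image_eqI[of "k - 1"]) auto
qed (auto simp: seg_ideal_def)

lemma chi_seg_ideal:
  assumes i: "1 \<le> i" "i \<le> t" and j: "1 \<le> j" "j < alpha i"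
  shows "chi alpha t q (seg_ideal i j) = (if q = seg_pos i j then 1 else 0)"
proof -
  have P: "seg_ideal i j \<in> ideals alpha t"
    using seg_ideal_in_ideals i j by simp
  have "q \<in> maxs alpha t (seg_ideal i j) \<longleftrightarrow> q = seg_pos i j"
  proof
    assume q: "q \<in> maxs alpha t (seg_ideal i j)"
    then have "q \<in> seg_ideal i j"
      using maxs_ideal_iff[OF P] by blast
    then obtain k where k: "k \<le> j" "q = seg_pos i k" "q \<in> F"
      by (auto simp: seg_ideal_def)
    show "q = seg_pos i j"
    proof (rule ccontr)
      assume "q \<noteq> seg_pos i j"
      with k have "k < j"
        using le_neq_implies_less by blast
      then have "seg_pos i (k + 1) \<in> F"
        using seg_pos_in_fence[OF i, of "k + 1"] j by simp
      then have "seg_pos i (k + 1) \<in> seg_ideal i j"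
        unfolding seg_ideal_def using \<open>k < j\<close> by (intro IntI rev_image_eqI[of "k + 1"]) auto
      moreover have "fcover alpha t q (seg_pos i (k + 1))"
        using fcover_seg_pos[OF i, of k] \<open>seg_pos i (k + 1) \<in> F\<close> \<open>k < j\<close> j k by simp
      ultimately show False
        using q maxs_ideal_iff[OF P] by blast
    qed
  next
    assume q: "q = seg_pos i j"
    have "seg_pos i (j + 1) \<noteq> seg_pos i k" if "k \<le> j" for k
      using seg_pos_eq_iff[OF i(1), of "j + 1" k] that j by simp
    then have "seg_pos i (j + 1) \<notin> seg_ideal i j"
      unfolding seg_ideal_def by fastforce
    moreover have "q \<in> seg_ideal i j"
      using q seg_pos_in_fence[OF i j] by (auto simp: seg_ideal_def)
    moreover have "fcover alpha t q y \<Longrightarrow> y = seg_pos i (j + 1)" for y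
      using q fcover_seg_interior_iff(1)[OF i j] by simp
    ultimately show "q \<in> maxs alpha t (seg_ideal i j)"
      unfolding maxs_ideal_iff[OF P] by blast
  qed
  then show ?thesis
    using P by (simp add: chi_def)
qed

lemma seg_offset_inner:
  "1 \<le> i \<Longrightarrow> y \<in> inner i \<Longrightarrow>
    seg_pos i (seg_offset i y) = y \<and> 1 \<le> seg_offset i y \<and> seg_offset i y < alpha i"
  using a_pred_add[of i] by (auto simp: seg_pos_def seg_offset_def)

lemma basis_elem_at_seg_ideal:
  assumes i: "1 \<le> i" "i \<le> t" and y: "y \<in> inner i"
  shows "basis_elem i' x (seg_ideal i (seg_offset i y)) = (if x = y then real (alpha i') else 0)"
proof -
  note y' = seg_offset_inner[OF i(1) y]
  have "chi_s alpha t k (seg_ideal i (seg_offset i y)) = 0" for k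
    using chi_seg_ideal[OF i, of "seg_offset i y" "a k"] y' a_notin_inner[OF y]
    by (simp add: chi_s_def)
  then show ?thesis
    using chi_seg_ideal[OF i, of "seg_offset i y" x] y' by (simp add: basis_elem_def scaleR_fun_def)
qed

lemma basis_elem_inj:
  assumes i: "1 \<le> i" "i \<le> t" and i': "1 \<le> i'" "i' \<le> t"
    and x: "x \<in> inner i'" and y: "y \<in> inner i" and eq: "basis_elem i' x = basis_elem i y"
  shows "x = y \<and> i' = i"
proof -
  have "(if x = y then real (alpha i') else 0) = real (alpha i)"
    using basis_elem_at_seg_ideal[OF i y, of i' x] basis_elem_at_seg_ideal[OF i y, of i y] eq
    by simp
  then have "x = y"
    using alpha_gt_0[OF i] by (auto split: if_splits)
  then show ?thesis
    using inner_disjoint x y i i' by blast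
qed

lemma independent_BA: "independent (BA alpha t)"
proof (rule independent_by_evaluation)
  fix v assume "v \<in> BA alpha t"
  then obtain i y where i: "1 \<le> i" "i \<le> t" and y: "y \<in> inner i" and v: "v = basis_elem i y"
    by (auto simp: BA_eq)
  have "w (seg_ideal i (seg_offset i y)) = 0" if w_BA: "w \<in> BA alpha t" and "w \<noteq> v" for w
  proof -
    obtain i' x where i': "1 \<le> i'" "i' \<le> t" and x: "x \<in> inner i'" and w: "w = basis_elem i' x"
      using w_BA by (auto simp: BA_eq)
    have "x \<noteq> y"
    proof
      assume "x = y"
      then have "i' = i"
        using inner_disjoint[OF x] y i(1) i'(1) by simp
      with \<open>x = y\<close> show False
        using \<open>w \<noteq> v\<close> v w by simp
    qed
    then show ?thesis
      using basis_elem_at_seg_ideal[OF i y] w by simp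
  qed
  moreover have "v (seg_ideal i (seg_offset i y)) \<noteq> 0"
    using basis_elem_at_seg_ideal[OF i y] alpha_gt_0[OF i] v by simp
  ultimately show "\<exists>p. v p \<noteq> 0 \<and> (\<forall>w\<in>BA alpha t. w \<noteq> v \<longrightarrow> w p = 0)"
    by blast
qed

lemma card_BA: "card (BA alpha t) = (\<Sum>i=1..t. alpha i - 1)"
proof -
  have disjoint: "basis_elem i ` inner i \<inter> basis_elem i' ` inner i' = {}"
    if "i \<in> {1..t}" "i' \<in> {1..t}" "i \<noteq> i'" for i i'
    using basis_elem_inj[of i' i] that by fastforce
  have inj: "inj_on (basis_elem i) (inner i)" if "i \<in> {1..t}" for i
    using basis_elem_inj[of i i] that by (auto intro: inj_onI)
  have "card (BA alpha t) = (\<Sum>i=1..t. card (basis_elem i ` inner i))"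
    unfolding BA_eq using disjoint by (intro card_UN_disjoint) auto
  also have "\<dots> = (\<Sum>i=1..t. card (inner i))"
    using inj by (intro sum.cong refl card_image)
  also have "\<dots> = (\<Sum>i=1..t. alpha i - 1)"
  proof (intro sum.cong refl)
    fix i assume "i \<in> {1..t}"
    then show "card (inner i) = alpha i - 1"
      using a_pred_add[of i] by auto
  qed
  finally show ?thesis .
qed

definition local_diff :: "(nat \<Rightarrow> real) \<Rightarrow> (nat \<Rightarrow> real) \<Rightarrow> nat set \<Rightarrow> nat set \<Rightarrow> nat \<Rightarrow> real" where
  "local_diff b cq K J q =
     b q * (chi alpha t q K - chi alpha t q J) - cq q * (toggle alpha t q K - toggle alpha t q J)"

lemma local_diff_cong:
  assumes "K \<in> ideals alpha t" "J \<in> ideals alpha t" "K' \<in> ideals alpha t" "J' \<in> ideals alpha t" "q \<in> F"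
    and "\<And>p. q - 1 \<le> p \<Longrightarrow> p \<le> q + 1 \<Longrightarrow> p \<in> K \<longleftrightarrow> p \<in> K'"
    and "\<And>p. q - 1 \<le> p \<Longrightarrow> p \<le> q + 1 \<Longrightarrow> p \<in> J \<longleftrightarrow> p \<in> J'"
  shows "local_diff b cq K J q = local_diff b cq K' J' q"
  using chi_toggle_local_eq[OF assms(1,3,5,6)] chi_toggle_local_eq[OF assms(2,4,5,7)]
  by (simp add: local_diff_def)

lemma local_diff_insert_far:
  assumes "J \<in> ideals alpha t" "insert x J \<in> ideals alpha t" "q \<in> F" "q \<notin> {x - 1, x, x + 1}"
  shows "local_diff b cq (insert x J) J q = 0"
proof -
  have "local_diff b cq (insert x J) J q = local_diff b cq J J q"
    using assms by (intro local_diff_cong) auto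
  then show ?thesis
    by (simp add: local_diff_def)
qed

lemma seg_pos_neighbours:
  assumes "1 \<le> i" "1 \<le> j" "j < alpha i"
  shows "{seg_pos i (j - 1), seg_pos i (j + 1)} = {seg_pos i j - 1, seg_pos i j + 1}"
  using assms a_pred_add[of i] by (auto simp: seg_pos_def)

lemma seg_mem_insert:
  assumes "1 \<le> i" "j \<le> alpha i" "k \<le> alpha i" "seg_pos i j \<in> F" "seg_pos i j \<notin> J"
  shows "seg_mem (insert (seg_pos i j) J) i k = seg_mem J i k + (if k = j then 1 else 0)"
  using assms seg_pos_eq_iff[of i k j] by (auto simp: seg_mem_def)

lemma local_diff_seg_interior:
  assumes J: "J \<in> ideals alpha t" and K: "insert (seg_pos i j) J \<in> ideals alpha t"
    and i: "1 \<le> i" "i \<le> t" and j: "j \<le> alpha i" "seg_pos i j \<in> F" "seg_pos i j \<notin> J"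
    and k: "1 \<le> k" "k < alpha i"
  shows "local_diff b cq (insert (seg_pos i j) J) J (seg_pos i k) =
    b (seg_pos i k) * ((if k = j then 1 else 0) - (if k + 1 = j then 1 else 0)) -
    cq (seg_pos i k) * ((if k - 1 = j then 1 else 0) - 2 * (if k = j then 1 else 0) +
                        (if k + 1 = j then 1 else 0))"
proof -
  have "k - 1 \<le> alpha i" "k \<le> alpha i" "k + 1 \<le> alpha i"
    using k by auto
  note ins = seg_mem_insert[OF i(1) j(1) _ j(2,3)]
  show ?thesis
    unfolding local_diff_def chi_toggle_seg_interior[OF J i k] chi_toggle_seg_interior[OF K i k]
      ins[OF \<open>k - 1 \<le> alpha i\<close>] ins[OF \<open>k \<le> alpha i\<close>] ins[OF \<open>k + 1 \<le> alpha i\<close>]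
    by (simp add: algebra_simps)
qed

lemma chi_eq_0_if_upper_cover:
  "I \<in> ideals alpha t \<Longrightarrow> fcover alpha t q y \<Longrightarrow> y \<in> I \<Longrightarrow> chi alpha t q I = 0"
  by (auto simp: chi_def maxs_ideal_iff)

lemma toggle_eq_0_if_lower_cover:
  "I \<in> ideals alpha t \<Longrightarrow> fcover alpha t y q \<Longrightarrow> y \<notin> I \<Longrightarrow> q \<notin> I \<Longrightarrow> toggle alpha t q I = 0"
  by (auto simp: toggle_def mins_compl_iff maxs_ideal_iff)

text \<open>All elements of the fence on the lower side of \<open>seg_pos i j\<close>.\<close>

definition seg_prefix :: "nat \<Rightarrow> nat \<Rightarrow> nat set" where
  "seg_prefix i j = (if odd i then {1..seg_pos i j} else {seg_pos i j..n})"

lemma seg_prefix_in_ideals: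
  assumes i: "1 \<le> i" "i \<le> t" and j: "j < alpha i"
  shows "seg_prefix i j \<in> ideals alpha t"
proof (cases "odd i")
  case True
  have "ascends (seg_pos i j)"
    using True i j a_pred_add[of i] ascends_iff[of i "seg_pos i j"] by (simp add: seg_pos_def)
  then show ?thesis
    using True j a_pred_add[OF i(1)] a_le_last[OF i(2)] by (auto simp: seg_prefix_def seg_pos_def
        intro!: interval_ideal)
next
  case False
  have "\<not> ascends (seg_pos i j - 1)"
    using False i j a_pred_add[of i] ascends_iff[of i "seg_pos i j - 1"] by (simp add: seg_pos_def)
  then show ?thesis
    using False j a_pred_add[OF i(1)] by (auto simp: seg_prefix_def seg_pos_def intro!: interval_ideal)
qed

lemma seg_prefix_insert:
  assumes "1 \<le> i" "i \<le> t" "1 \<le> j" "j < alpha i"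
  shows "seg_prefix i j = insert (seg_pos i j) (seg_prefix i (j - 1))"
    and "seg_pos i j \<notin> seg_prefix i (j - 1)"
  using assms seg_pos_in_fence[OF assms] a_pred_add[of i]
  by (auto simp: seg_prefix_def seg_pos_def fence_eq)

lemma chi_seg_bottom_prefix:
  assumes i: "1 \<le> i" "i \<le> t" and bot: "seg_pos i 0 \<in> F"
  shows "chi alpha t (seg_pos i 0) (seg_prefix i 0) = 0"
proof (cases "odd i")
  case True
  then have "2 \<le> i"
    using bot i by (cases "i = 1") (auto simp: seg_pos_def fence_eq)
  moreover have ge: "2 \<le> a (i - 1)" "a (i - 1) < n"
    using a_ge_2[of "i - 1"] a_less_n[of "i - 1"] \<open>2 \<le> i\<close> i by auto
  ultimately have "fcover alpha t (a (i - 1)) (a (i - 1) - 1)"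
    using True i ascends_before_a[of i] by (auto simp: fcover_iff)
  then show ?thesis
    using True i seg_prefix_in_ideals[OF i, of 0] alpha_gt_0[OF i] ge
    by (intro chi_eq_0_if_upper_cover[where y = "a (i - 1) - 1"]) (auto simp: seg_prefix_def seg_pos_def)
next
  case False
  then have "i < t"
    using bot i a_last by (cases "i = t") (auto simp: seg_pos_def fence_eq)
  then have "fcover alpha t (a i) (a i + 1)"
    using False i ascends_at_a[of i] a_less_n[of i] a_ge_2[OF i(1)] by (auto simp: fcover_iff)
  then show ?thesis
    using False i seg_prefix_in_ideals[OF i, of 0] alpha_gt_0[OF i] a_less_n[of i] \<open>i < t\<close>
    by (intro chi_eq_0_if_upper_cover[where y = "a i + 1"]) (auto simp: seg_prefix_def seg_pos_def)
qed

lemma toggle_seg_top_prefix: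
  assumes i: "1 \<le> i" "i \<le> t" and top: "seg_pos i (alpha i) \<in> F"
  shows "toggle alpha t (seg_pos i (alpha i)) (seg_prefix i (alpha i - 1)) = 0"
proof (cases "odd i")
  case True
  then have top_eq: "seg_pos i (alpha i) = a i"
    using a_pred_add[of i] i by (simp add: seg_pos_def)
  then have "i < t"
    using top i a_last by (cases "i = t") (auto simp: fence_eq)
  then have "fcover alpha t (a i + 1) (a i)"
    using True i ascends_at_a[of i] a_less_n[of i] a_ge_2[OF i(1)] by (auto simp: fcover_iff)
  then show ?thesis
    using True i seg_prefix_in_ideals[OF i, of "alpha i - 1"] alpha_gt_0[OF i] a_pred_add[of i] top_eq
    by (intro toggle_eq_0_if_lower_cover[where y = "a i + 1"]) (auto simp: seg_prefix_def seg_pos_def)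
next
  case False
  then have top_eq: "seg_pos i (alpha i) = a (i - 1)" and "2 \<le> i"
    using a_pred_add[of i] i by (auto simp: seg_pos_def)
  moreover have "2 \<le> a (i - 1)" "a (i - 1) < n"
    using a_ge_2[of "i - 1"] a_less_n[of "i - 1"] \<open>2 \<le> i\<close> i by auto
  ultimately have "fcover alpha t (a (i - 1) - 1) (a (i - 1))"
    using False i ascends_before_a[of i] by (auto simp: fcover_iff)
  then show ?thesis
    using False i seg_prefix_in_ideals[OF i, of "alpha i - 1"] alpha_gt_0[OF i] a_pred_add[of i] top_eq
    by (intro toggle_eq_0_if_lower_cover[where y = "a (i - 1) - 1"]) (auto simp: seg_prefix_def seg_pos_def)
qed

lemma local_diff_seg_bottom_prefix:
  assumes i: "1 \<le> i" "i \<le> t" and al: "2 \<le> alpha i" and bot: "seg_pos i 0 \<in> F"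
  shows "local_diff b cq (seg_prefix i 1) (seg_prefix i 0) (seg_pos i 0) = 0"
proof -
  have j: "1 \<le> (1::nat)" "1 < alpha i"
    using al by auto
  have K: "seg_prefix i 1 = insert (seg_pos i 1) (seg_prefix i 0)" "seg_pos i 1 \<notin> seg_prefix i 0"
    using seg_prefix_insert[OF i j] by simp_all
  have ideals: "seg_prefix i 0 \<in> ideals alpha t" "seg_prefix i 1 \<in> ideals alpha t"
    using seg_prefix_in_ideals[OF i] al by auto
  have x: "seg_pos i 1 \<in> F"
    using seg_pos_in_fence[OF i j] .
  have "chi alpha t (seg_pos i 0) (seg_prefix i 1) = 0"
    using chi_eq_0_if_upper_cover[OF ideals(2)] fcover_seg_pos[OF i, of 0] bot x K(1) al by simp
  moreover have "seg_mem (seg_prefix i 1) i 0 = seg_mem (seg_prefix i 0) i 0"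
    using seg_mem_insert[OF i(1) _ _ x K(2), where k = 0] K(1) al by simp
  ultimately show ?thesis
    using chi_seg_bottom_prefix[OF i bot] toggle_seg_bottom[OF ideals(1) i bot]
      toggle_seg_bottom[OF ideals(2) i bot] by (simp add: local_diff_def)
qed

lemma local_diff_seg_top_prefix:
  assumes i: "1 \<le> i" "i \<le> t" and al: "2 \<le> alpha i" and top: "seg_pos i (alpha i) \<in> F"
  shows "local_diff b cq (seg_prefix i (alpha i - 1)) (seg_prefix i (alpha i - 2)) (seg_pos i (alpha i)) = 0"
proof -
  define j where "j = alpha i - 1"
  have j: "1 \<le> j" "j < alpha i" "j - 1 = alpha i - 2" "j + 1 = alpha i"
    using al by (auto simp: j_def)
  note K = seg_prefix_insert[OF i j(1,2)]
  have ideals: "seg_prefix i (j - 1) \<in> ideals alpha t" "seg_prefix i j \<in> ideals alpha t"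
    using seg_prefix_in_ideals[OF i] j by auto
  have x: "seg_pos i j \<in> F"
    using seg_pos_in_fence[OF i j(1,2)] .
  have cov: "fcover alpha t (seg_pos i j) (seg_pos i (alpha i))"
    using fcover_seg_pos[OF i j(2) x] top j(4) by simp
  then have "seg_pos i (alpha i) \<notin> seg_prefix i (j - 1)"
    using ideals(1) K(2) unfolding ideals_iff_covers by blast
  then have "toggle alpha t (seg_pos i (alpha i)) (seg_prefix i (j - 1)) = 0"
    using toggle_eq_0_if_lower_cover[OF ideals(1) cov K(2)] by simp
  moreover have "toggle alpha t (seg_pos i (alpha i)) (seg_prefix i j) = 0"
    using toggle_seg_top_prefix[OF i top] by (simp add: j_def)
  moreover have "seg_mem (seg_prefix i j) i (alpha i) = seg_mem (seg_prefix i (j - 1)) i (alpha i)"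
    using seg_mem_insert[OF i(1) _ _ x K(2), where k = "alpha i"] K(1) j by simp
  ultimately show ?thesis
    unfolding j(3)[symmetric] j_def[symmetric]
    using chi_seg_top[OF ideals(1) i top] chi_seg_top[OF ideals(2) i top] by (simp add: local_diff_def)
qed

lemma shared_max_props:
  assumes i: "odd i" "1 \<le> i" "i < t"
  shows "a i \<in> F" "2 \<le> a i" "a i < n" "\<not> ascends (a i)" "ascends (a i - 1)"
proof -
  show "2 \<le> a i" "a i < n"
    using a_ge_2[OF i(2)] a_less_n[OF i(2,3)] by auto
  then show "a i \<in> F"
    by (simp add: fence_eq)
  show "\<not> ascends (a i)"
    using ascends_at_a[OF i(2,3)] i(1) by simp
  show "ascends (a i - 1)"
    using ascends_iff[of i "a i - 1"] a_pred_add[OF i(2)] alpha_gt_0[of i] i by simp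
qed

lemma shared_min_props:
  assumes i: "even i" "1 \<le> i" "i < t"
  shows "a i \<in> F" "3 \<le> a i" "a i < n" "ascends (a i)" "\<not> ascends (a i - 1)"
proof -
  have "2 \<le> i"
    using i by presburger
  then have "2 \<le> a (i - 1)"
    using a_ge_2[of "i - 1"] by simp
  then show "3 \<le> a i" "a i < n"
    using a_pred_add[OF i(2)] alpha_gt_0[of i] a_less_n[OF i(2,3)] i by auto
  then show "a i \<in> F"
    by (simp add: fence_eq)
  show "ascends (a i)"
    using ascends_at_a[OF i(2,3)] i(1) by simp
  show "\<not> ascends (a i - 1)"
    using ascends_iff[of i "a i - 1"] a_pred_add[OF i(2)] alpha_gt_0[of i] i by simp
qed

lemma local_diff_shared_max_below:
  assumes i: "odd i" "1 \<le> i" "i < t"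
  shows "local_diff b cq F (F - {a i}) (a i - 1) =
    (if 2 \<le> alpha i then - (b (a i - 1) + cq (a i - 1)) else 0)"
proof -
  note s = shared_max_props[OF i]
  have J: "F - {a i} \<in> ideals alpha t"
    using s by (intro fence_minus_max_ideal) auto
  have q: "a i - 1 \<in> F"
    using s by (auto simp: fence_eq)
  have "2 \<le> a i - 1 \<and> \<not> ascends (a i - 1 - 1) \<longleftrightarrow> \<not> 2 \<le> alpha i"
  proof (cases "2 \<le> alpha i")
    case True
    then show ?thesis
      using ascends_iff[of i "a i - 1 - 1"] a_pred_add[OF i(2)] i by simp
  next
    case False
    then have "i \<noteq> 1"
      using alpha_first by auto
    then have "a i - 1 = a (i - 1)" "2 \<le> i"
      using False a_pred_add[OF i(2)] alpha_gt_0[of i] i by auto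
    then show ?thesis
      using ascends_before_a[of i] a_ge_2[of "i - 1"] False i by simp
  qed
  then show ?thesis
    unfolding local_diff_def chi_local[OF J q] chi_local[OF fence_ideal q]
      toggle_local[OF J q] toggle_local[OF fence_ideal q]
    using s q by (auto simp: fence_eq)
qed

lemma local_diff_shared_max_above:
  assumes i: "odd i" "1 \<le> i" "i < t"
  shows "local_diff b cq F (F - {a i}) (a i + 1) =
    (if 2 \<le> alpha (i + 1) then - (b (a i + 1) + cq (a i + 1)) else 0)"
proof -
  note s = shared_max_props[OF i]
  have J: "F - {a i} \<in> ideals alpha t"
    using s by (intro fence_minus_max_ideal) auto
  have q: "a i + 1 \<in> F"
    using s by (auto simp: fence_eq)
  have seg: "a i + alpha (i + 1) = a (i + 1)"
    using fa_Suc[of alpha i] by simp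
  have "a i + 1 < n \<and> ascends (a i + 1) \<longleftrightarrow> \<not> 2 \<le> alpha (i + 1)"
  proof (cases "2 \<le> alpha (i + 1)")
    case True
    then show ?thesis
      using ascends_iff[of "i + 1" "a i + 1"] seg i by simp
  next
    case False
    then have "i + 1 \<noteq> t"
      using alpha_last by auto
    then have "a i + 1 = a (i + 1)" "i + 1 < t"
      using False seg alpha_gt_0[of "i + 1"] i by auto
    then show ?thesis
      using ascends_at_a[of "i + 1"] a_less_n[of "i + 1"] False i by simp
  qed
  then show ?thesis
    unfolding local_diff_def chi_local[OF J q] chi_local[OF fence_ideal q]
      toggle_local[OF J q] toggle_local[OF fence_ideal q]
    using s q by (auto simp: fence_eq)
qed

lemma local_diff_shared_min_below:
  assumes i: "even i" "1 \<le> i" "i < t"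
  shows "local_diff b cq {a i} {} (a i - 1) = (if 2 \<le> alpha i then - cq (a i - 1) else 0)"
proof -
  note s = shared_min_props[OF i]
  have K: "{a i} \<in> ideals alpha t"
    using interval_ideal[of "a i" "a i"] s by simp
  have q: "a i - 1 \<in> F"
    using s by (auto simp: fence_eq)
  have "ascends (a i - 1 - 1) \<longleftrightarrow> \<not> 2 \<le> alpha i"
  proof (cases "2 \<le> alpha i")
    case True
    then show ?thesis
      using ascends_iff[of i "a i - 1 - 1"] a_pred_add[OF i(2)] i by simp
  next
    case False
    have "2 \<le> i"
      using i by presburger
    moreover have "a i - 1 = a (i - 1)"
      using False a_pred_add[OF i(2)] alpha_gt_0[of i] i by auto
    ultimately show ?thesis
      using ascends_before_a[of i] False i by simp
  qed
  then show ?thesis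
    unfolding local_diff_def chi_local[OF empty_ideal q] chi_local[OF K q]
      toggle_local[OF empty_ideal q] toggle_local[OF K q]
    using s q by auto
qed

lemma local_diff_shared_min_above:
  assumes i: "even i" "1 \<le> i" "i < t"
  shows "local_diff b cq {a i} {} (a i + 1) = (if 2 \<le> alpha (i + 1) then - cq (a i + 1) else 0)"
proof -
  note s = shared_min_props[OF i]
  have K: "{a i} \<in> ideals alpha t"
    using interval_ideal[of "a i" "a i"] s by simp
  have q: "a i + 1 \<in> F"
    using s by (auto simp: fence_eq)
  have seg: "a i + alpha (i + 1) = a (i + 1)"
    using fa_Suc[of alpha i] by simp
  have "a i + 1 < n \<and> \<not> ascends (a i + 1) \<longleftrightarrow> \<not> 2 \<le> alpha (i + 1)"
  proof (cases "2 \<le> alpha (i + 1)")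
    case True
    then show ?thesis
      using ascends_iff[of "i + 1" "a i + 1"] seg i by simp
  next
    case False
    then have "i + 1 \<noteq> t"
      using alpha_last by auto
    then have "a i + 1 = a (i + 1)" "i + 1 < t"
      using False seg alpha_gt_0[of "i + 1"] i by auto
    then show ?thesis
      using ascends_at_a[of "i + 1"] a_less_n[of "i + 1"] False i by simp
  qed
  then show ?thesis
    unfolding local_diff_def chi_local[OF empty_ideal q] chi_local[OF K q]
      toggle_local[OF empty_ideal q] toggle_local[OF K q]
    using s q by auto
qed

definition seg_avg :: "(nat \<Rightarrow> real) \<Rightarrow> nat \<Rightarrow> real" where
  "seg_avg b i = (\<Sum>x\<in>inner i. b x) / real (alpha i)"

lemma sum_seg_pos_inner: "1 \<le> i \<Longrightarrow> (\<Sum>j=1..alpha i - 1. g (seg_pos i j)) = (\<Sum>x\<in>inner i. g x)"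
proof -
  assume "1 \<le> i"
  have "{1..alpha i - 1} = {1..<alpha i}"
    by auto
  then show ?thesis
    using sum.reindex_bij_betw[OF bij_betw_seg_pos_inner[OF \<open>1 \<le> i\<close>], of g] by simp
qed

lemma fence_eq_inner_shared: "F = (\<Union>i\<in>{1..t}. inner i) \<union> a ` {1..t - 1}"
proof (intro set_eqI iffI)
  fix q assume q: "q \<in> F"
  then have "q < a t"
    using a_last by (simp add: fence_eq)
  then obtain i where i: "1 \<le> i" "i \<le> t" "a (i - 1) \<le> q" "q < a i"
    using seg_index_props by blast
  show "q \<in> (\<Union>i\<in>{1..t}. inner i) \<union> a ` {1..t - 1}"
  proof (cases "q = a (i - 1)")
    case True
    then have "i - 1 \<in> {1..t - 1}"
      using i q by (cases "i = 1") (auto simp: fence_eq)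
    then show ?thesis
      using True by blast
  next
    case False
    then show ?thesis
      using i by auto
  qed
next
  fix q assume "q \<in> (\<Union>i\<in>{1..t}. inner i) \<union> a ` {1..t - 1}"
  then show "q \<in> F"
  proof (elim UnE)
    assume "q \<in> (\<Union>i\<in>{1..t}. inner i)"
    then obtain i where "i \<le> t" "q \<in> inner i"
      by auto
    then show "q \<in> F"
      using inner_subset_fence[of i] by blast
  next
    assume "q \<in> a ` {1..t - 1}"
    then obtain k where "k \<in> {1..t - 1}" "q = a k"
      by blast
    then show "q \<in> F"
      using a_in_fence_iff[of k] by auto
  qed
qed

lemma sum_fence_split: "(\<Sum>q\<in>F. g q) = (\<Sum>i=1..t. \<Sum>x\<in>inner i. g x) + (\<Sum>k=1..t - 1. g (a k))"
proof -
  have "(\<Union>i\<in>{1..t}. inner i) \<inter> a ` {1..t - 1} = {}"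
    using a_notin_inner by blast
  moreover have "inner i \<inter> inner i' = {}" if "i \<in> {1..t}" "i' \<in> {1..t}" "i \<noteq> i'" for i i'
    using inner_disjoint that by fastforce
  ultimately have "(\<Sum>q\<in>F. g q) = (\<Sum>i=1..t. \<Sum>x\<in>inner i. g x) + (\<Sum>q\<in>a ` {1..t - 1}. g q)"
    unfolding fence_eq_inner_shared by (simp add: sum.union_disjoint sum.UNION_disjoint)
  then show ?thesis
    using sum.reindex[OF inj_on_a, of g] by simp
qed

end

locale toggle_relation = fence_shape +
  fixes b cq :: "nat \<Rightarrow> real" and c :: real
  assumes relation: "\<And>I. I \<in> ideals alpha t \<Longrightarrow>
    (\<Sum>q\<in>F. b q * chi alpha t q I) = c + (\<Sum>q\<in>F. cq q * toggle alpha t q I)"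
begin

lemma sum_local_diff_eq_0:
  assumes "K \<in> ideals alpha t" "J \<in> ideals alpha t"
  shows "(\<Sum>q\<in>F. local_diff b cq K J q) = 0"
  using relation[OF assms(1)] relation[OF assms(2)]
  by (simp add: local_diff_def sum_subtractf right_diff_distrib)

lemma local_diffs_around_insert:
  assumes J: "J \<in> ideals alpha t" and K: "insert x J \<in> ideals alpha t" and x: "x \<in> F" "x \<notin> J"
    and nb: "{p0, p2} = {x - 1, x + 1}"
  shows "(if p0 \<in> F then local_diff b cq (insert x J) J p0 else 0) + local_diff b cq (insert x J) J x
    + (if p2 \<in> F then local_diff b cq (insert x J) J p2 else 0) = 0"
proof -
  have "finite F" "1 \<le> x"
    using x by (simp_all add: fence_eq)
  then have "distinct [p0, x, p2]"
    using nb by (auto simp: doubleton_eq_iff)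
  moreover have "local_diff b cq (insert x J) J q = 0" if "q \<in> F" "q \<notin> {p0, x, p2}" for q
  proof -
    have "q \<notin> {x - 1, x, x + 1}"
      using that(2) nb by blast
    then show ?thesis
      using local_diff_insert_far[OF J K that(1)] by blast
  qed
  ultimately show ?thesis
    using sum_three_support[OF \<open>finite F\<close> x(1), of p0 p2 "local_diff b cq (insert x J) J"]
      sum_local_diff_eq_0[OF K J] by simp
qed

lemma local_diffs_insert:
  assumes "J \<in> ideals alpha t" "K \<in> ideals alpha t" "K = insert x J" "x \<in> F" "x \<notin> J"
  shows "(if 2 \<le> x then local_diff b cq K J (x - 1) else 0) + local_diff b cq K J x
    + (if x < n then local_diff b cq K J (x + 1) else 0) = 0"
proof -
  have "(if x - 1 \<in> F then local_diff b cq K J (x - 1) else 0) + local_diff b cq K J x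
    + (if x + 1 \<in> F then local_diff b cq K J (x + 1) else 0) = 0"
    unfolding assms(3) using assms(2) unfolding assms(3)
    by (rule local_diffs_around_insert[OF assms(1) _ assms(4,5) refl])
  moreover have "x - 1 \<in> F \<longleftrightarrow> 2 \<le> x" "x + 1 \<in> F \<longleftrightarrow> x < n"
    using assms(4) by (auto simp: fence_eq)
  ultimately show ?thesis
    by (simp only:)
qed

text \<open>Both toggles of \<open>x\<close> satisfy \<open>local_diffs_insert\<close>, and the terms at \<open>x - 1\<close>
  and \<open>x\<close> agree; so the terms at \<open>x + 1\<close> agree as well, although the two ideals may differ
  around \<open>x + 1\<close>.\<close>

lemma local_diff_succ_eq:
  assumes J1: "J1 \<in> ideals alpha t" "insert x J1 \<in> ideals alpha t"
    and J2: "J2 \<in> ideals alpha t" "insert x J2 \<in> ideals alpha t"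
    and x: "x \<in> F" "x < n" "x \<notin> J1" and agree: "\<And>p. p \<le> x + 1 \<Longrightarrow> p \<in> J1 \<longleftrightarrow> p \<in> J2"
  shows "local_diff b cq (insert x J1) J1 (x + 1) = local_diff b cq (insert x J2) J2 (x + 1)"
proof -
  have "x \<notin> J2"
    using agree x(3) by simp
  have "local_diff b cq (insert x J1) J1 x = local_diff b cq (insert x J2) J2 x"
    using agree by (intro local_diff_cong J1 J2 x(1)) auto
  moreover have "local_diff b cq (insert x J1) J1 (x - 1) = local_diff b cq (insert x J2) J2 (x - 1)"
    if "2 \<le> x"
    using agree that x(1) by (intro local_diff_cong J1 J2) (auto simp: fence_eq)
  ultimately show ?thesis
    using local_diffs_insert[OF J1 refl x(1,3)] local_diffs_insert[OF J2 refl x(1) \<open>x \<notin> J2\<close>] x(2)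
    by (auto split: if_splits)
qed

lemma seg_recurrence:
  assumes i: "1 \<le> i" "i \<le> t" and j: "1 \<le> j" "j < alpha i"
  shows "b (seg_pos i j) + 2 * cq (seg_pos i j) =
    (if 2 \<le> j then b (seg_pos i (j - 1)) + cq (seg_pos i (j - 1)) else 0)
    + (if j + 2 \<le> alpha i then cq (seg_pos i (j + 1)) else 0)"
proof -
  define J where "J = seg_prefix i (j - 1)"
  define D where "D = local_diff b cq (seg_prefix i j) J"
  have K: "seg_prefix i j = insert (seg_pos i j) J"
    using seg_prefix_insert(1)[OF i j] by (simp add: J_def)
  have x: "seg_pos i j \<in> F" "seg_pos i j \<notin> J" "j \<le> alpha i"
    using seg_pos_in_fence[OF i j] seg_prefix_insert(2)[OF i j] j by (auto simp: J_def)
  have ideals: "J \<in> ideals alpha t" "insert (seg_pos i j) J \<in> ideals alpha t"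
    using seg_prefix_in_ideals[OF i, of "j - 1"] seg_prefix_in_ideals[OF i, of j] j K
    by (simp_all add: J_def)
  note interior = local_diff_seg_interior[OF ideals i x(3,1,2), where b = b and cq = cq, folded K, folded D_def]
  have "j - 1 \<noteq> j"
    using j by simp
  then have "D (seg_pos i j) = b (seg_pos i j) + 2 * cq (seg_pos i j)"
    using interior[of j] j by simp
  moreover have "(if seg_pos i (j - 1) \<in> F then D (seg_pos i (j - 1)) else 0) =
      (if 2 \<le> j then - b (seg_pos i (j - 1)) - cq (seg_pos i (j - 1)) else 0)"
  proof (cases "2 \<le> j")
    case True
    then have "1 \<le> j - 1" "j - 1 < alpha i" "j - 1 \<noteq> j" "j - 1 - 1 \<noteq> j" "j - 1 + 1 = j"
      using j by auto
    then show ?thesis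
      using interior[of "j - 1"] seg_pos_in_fence[OF i, of "j - 1"] True by simp
  next
    case False
    then have "j = 1"
      using j by simp
    then show ?thesis
      using local_diff_seg_bottom_prefix[OF i, of b cq] j by (simp add: D_def J_def)
  qed
  moreover have "(if seg_pos i (j + 1) \<in> F then D (seg_pos i (j + 1)) else 0) =
      (if j + 2 \<le> alpha i then - cq (seg_pos i (j + 1)) else 0)"
  proof (cases "j + 2 \<le> alpha i")
    case True
    then show ?thesis
      using interior[of "j + 1"] seg_pos_in_fence[OF i, of "j + 1"] j by simp
  next
    case False
    then have "j + 1 = alpha i" "j = alpha i - 1" "j - 1 = alpha i - 2"
      using j by auto
    then show ?thesis
      using local_diff_seg_top_prefix[OF i, of b cq] j by (simp add: D_def J_def)
  qed
  ultimately show ?thesis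
    using local_diffs_around_insert[OF ideals x(1,2) seg_pos_neighbours[OF i(1) j], folded K, folded D_def]
    by (simp add: algebra_simps split: if_splits)
qed

lemma seg_avg_ends:
  assumes i: "1 \<le> i" "i \<le> t"
  shows "(if 2 \<le> alpha i then b (seg_pos i (alpha i - 1)) + cq (seg_pos i (alpha i - 1)) else 0) =
      seg_avg b i \<and> (if 2 \<le> alpha i then cq (seg_pos i 1) else 0) = - seg_avg b i"
proof (cases "2 \<le> alpha i")
  case True
  have rec: "(\<Sum>j=1..alpha i - 1. b (seg_pos i j)) = - (real (alpha i) * cq (seg_pos i 1)) \<and>
      b (seg_pos i (alpha i - 1)) + cq (seg_pos i (alpha i - 1)) = - cq (seg_pos i 1)"
    by (rule recurrence_sum_last[OF True seg_recurrence[OF i]])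
  then have "(\<Sum>x\<in>inner i. b x) = - (real (alpha i) * cq (seg_pos i 1))"
    using sum_seg_pos_inner[OF i(1), of b] by simp
  then have "seg_avg b i = - cq (seg_pos i 1)"
    using True by (simp add: seg_avg_def)
  then show ?thesis
    using True rec by simp
next
  case False
  then have "inner i = {}"
    using a_pred_add[OF i(1)] by auto
  then show ?thesis
    using False by (simp add: seg_avg_def)
qed

lemma shared_max_relation:
  assumes i: "odd i" "1 \<le> i" "i < t"
  shows "b (a i) + 2 * cq (a i) = (if 2 \<le> alpha i then b (a i - 1) + cq (a i - 1) else 0)
     + (if 2 \<le> alpha (i + 1) then b (a i + 1) + cq (a i + 1) else 0)"
proof -
  note s = shared_max_props[OF i]
  have J: "F - {a i} \<in> ideals alpha t"
    using s by (intro fence_minus_max_ideal) auto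
  have "F = insert (a i) (F - {a i})"
    using s by auto
  note sum_zero = local_diffs_insert[OF J fence_ideal this s(1)]
  have "local_diff b cq F (F - {a i}) (a i) = b (a i) + 2 * cq (a i)"
    unfolding local_diff_def chi_local[OF J s(1)] chi_local[OF fence_ideal s(1)]
      toggle_local[OF J s(1)] toggle_local[OF fence_ideal s(1)]
    using s by (auto simp: fence_eq)
  then show ?thesis
    using sum_zero local_diff_shared_max_below[OF i] local_diff_shared_max_above[OF i] s
    by (auto split: if_splits)
qed

text \<open>For a shared maximum \<open>s\<close>, toggle \<open>s - 1\<close> in two ideals that differ only
  above \<open>s\<close>, namely by whether they contain \<open>s + 1\<close>; this isolates \<open>cq s\<close>.\<close>

lemma toggle_coeff_shared_max:
  assumes i: "odd i" "1 \<le> i" "i < t"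
  shows "cq (a i) = 0"
proof -
  define s where "s = a i"
  define lo where "lo = max 1 (a (i - 1))"
  define W where "W = {s + 1..min (a (i + 1)) n}"
  note s = shared_max_props[OF i, folded s_def]
  have lo: "1 \<le> lo" "a (i - 1) \<le> lo" "lo \<le> s - 1"
    using a_pred_add[OF i(2)] alpha_gt_0[of i] i s(2) by (auto simp: lo_def s_def)
  have lo_bottom: "\<not> ascends (lo - 1)" if "2 \<le> lo"
  proof -
    have "lo = a (i - 1)" "i \<noteq> 1"
      using that by (auto simp: lo_def)
    moreover have "2 \<le> i"
      using \<open>i \<noteq> 1\<close> i by simp
    ultimately show ?thesis
      using ascends_before_a[of i] i by simp
  qed
  have up: "ascends y" if "a (i - 1) \<le> y" "y < s" for y
    using ascends_iff[of i y] that i by (simp add: s_def)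
  have J1: "{lo..s - 2} \<in> ideals alpha t" and K1: "{lo..s - 1} \<in> ideals alpha t"
    using lo lo_bottom up s by (auto intro!: interval_ideal)
  have Wi: "W \<in> ideals alpha t"
    unfolding W_def
  proof (rule interval_ideal)
    assume "min (a (i + 1)) n < n"
    then have lt: "a (i + 1) < n"
      by simp
    then have "i + 1 < t"
      using a_last i by (cases "i + 1 = t") auto
    then show "ascends (min (a (i + 1)) n)"
      using ascends_at_a[of "i + 1"] i lt by simp
  qed (use s in auto)
  have W_above: "p \<notin> W" if "p \<le> s" for p
    using that by (simp add: W_def)
  have "s + 1 \<in> W"
    using s fa_Suc[of alpha i] alpha_gt_0[of "i + 1"] i by (auto simp: W_def s_def)
  have ins: "insert (s - 1) {lo..s - 2} = {lo..s - 1}" "insert (s - 1) ({lo..s - 2} \<union> W) = {lo..s - 1} \<union> W"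
    using lo s by auto
  have x: "s - 1 \<in> F" "s - 1 < n" "s - 1 \<notin> {lo..s - 2}" "s - 1 + 1 = s"
    using s by (auto simp: fence_eq)
  have "local_diff b cq {lo..s - 1} {lo..s - 2} s = local_diff b cq ({lo..s - 1} \<union> W) ({lo..s - 2} \<union> W) s"
    using local_diff_succ_eq[OF J1 K1[folded ins(1)] ideal_Un[OF J1 Wi] ideal_Un[OF K1 Wi, folded ins(2)]
        x(1-3)] W_above
    unfolding ins x(4) by blast
  moreover have "local_diff b cq {lo..s - 1} {lo..s - 2} s = 0"
    unfolding local_diff_def chi_local[OF J1 s(1)] chi_local[OF K1 s(1)]
      toggle_local[OF J1 s(1)] toggle_local[OF K1 s(1)]
    using s by auto
  moreover have "local_diff b cq ({lo..s - 1} \<union> W) ({lo..s - 2} \<union> W) s = - cq s"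
    unfolding local_diff_def chi_local[OF ideal_Un[OF J1 Wi] s(1)] chi_local[OF ideal_Un[OF K1 Wi] s(1)]
      toggle_local[OF ideal_Un[OF J1 Wi] s(1)] toggle_local[OF ideal_Un[OF K1 Wi] s(1)]
    using s lo up W_above \<open>s + 1 \<in> W\<close> by auto
  ultimately show ?thesis
    by (simp add: s_def)
qed

lemma shared_min_relation:
  assumes i: "even i" "1 \<le> i" "i < t"
  shows "b (a i) + 2 * cq (a i) = (if 2 \<le> alpha i then cq (a i - 1) else 0)
     + (if 2 \<le> alpha (i + 1) then cq (a i + 1) else 0)"
proof -
  note s = shared_min_props[OF i]
  have K: "{a i} \<in> ideals alpha t"
    using interval_ideal[of "a i" "a i"] s by simp
  note sum_zero = local_diffs_insert[OF empty_ideal K _ s(1)]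
  have "local_diff b cq {a i} {} (a i) = b (a i) + 2 * cq (a i)"
    unfolding local_diff_def chi_local[OF empty_ideal s(1)] chi_local[OF K s(1)]
      toggle_local[OF empty_ideal s(1)] toggle_local[OF K s(1)]
    using s by auto
  then show ?thesis
    using sum_zero local_diff_shared_min_below[OF i] local_diff_shared_min_above[OF i] s
    by (auto split: if_splits)
qed

text \<open>The same trick at a shared minimum.\<close>

lemma shared_min_coeff_of_ideals:
  assumes i: "even i" "1 \<le> i" "i < t"
    and J1: "J1 \<in> ideals alpha t" "insert (a i - 1) J1 \<in> ideals alpha t"
    and J2: "J2 \<in> ideals alpha t" "insert (a i - 1) J2 \<in> ideals alpha t"
    and agree: "\<And>p. p \<le> a i \<Longrightarrow> p \<in> J1 \<longleftrightarrow> p \<in> J2"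
    and mem: "a i - 1 \<notin> J1" "a i \<in> J1" "a i + 1 \<notin> J1" "a i + 1 \<in> J2"
  shows "b (a i) + cq (a i) = 0"
proof -
  note s = shared_min_props[OF i]
  have "a i - 1 + 1 = a i"
    using s by simp
  then have "local_diff b cq (insert (a i - 1) J1) J1 (a i) =
      local_diff b cq (insert (a i - 1) J2) J2 (a i)"
    using local_diff_succ_eq[OF J1 J2] agree mem s by (auto simp: fence_eq)
  moreover have "local_diff b cq (insert (a i - 1) J1) J1 (a i) = - b (a i) - cq (a i)"
    unfolding local_diff_def chi_local[OF J1(1) s(1)] chi_local[OF J1(2) s(1)]
      toggle_local[OF J1(1) s(1)] toggle_local[OF J1(2) s(1)]
    using s mem by auto
  moreover have "a i \<in> J2" "a i - 1 \<notin> J2"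
    using agree[of "a i"] agree[of "a i - 1"] mem by auto
  then have "local_diff b cq (insert (a i - 1) J2) J2 (a i) = 0"
    unfolding local_diff_def chi_local[OF J2(1) s(1)] chi_local[OF J2(2) s(1)]
      toggle_local[OF J2(1) s(1)] toggle_local[OF J2(2) s(1)]
    using s mem by auto
  ultimately show ?thesis
    by simp
qed

lemma shared_min_coeff:
  assumes i: "even i" "1 \<le> i" "i < t"
  shows "b (a i) + cq (a i) = 0"
proof -
  define s where "s = a i"
  note s = shared_min_props[OF i, folded s_def]
  have min_coeff: "b s + cq s = 0"
    if "J1 \<in> ideals alpha t" "insert (s - 1) J1 \<in> ideals alpha t"
      "J2 \<in> ideals alpha t" "insert (s - 1) J2 \<in> ideals alpha t"
      "\<And>p. p \<le> s \<Longrightarrow> p \<in> J1 \<longleftrightarrow> p \<in> J2"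
      "s - 1 \<notin> J1" "s \<in> J1" "s + 1 \<notin> J1" "s + 1 \<in> J2" for J1 J2
    using shared_min_coeff_of_ideals[OF i, of J1 J2] that by (simp add: s_def)
  show ?thesis
  proof (cases "2 \<le> alpha i")
    case True
    then have "\<not> ascends (s - 1 - 1)"
      using ascends_iff[of i "s - 1 - 1"] a_pred_add[OF i(2)] i by (simp add: s_def)
    then have "{s - 1..s} \<in> ideals alpha t" "{s - 1..n} \<in> ideals alpha t"
      using s by (intro interval_ideal; auto)+
    moreover have "{s..s} \<in> ideals alpha t" "{s..n} \<in> ideals alpha t"
      using s by (intro interval_ideal; auto)+
    moreover have "insert (s - 1) {s..s} = {s - 1..s}" "insert (s - 1) {s..n} = {s - 1..n}"
      using s by auto
    ultimately show ?thesis
      unfolding s_def[symmetric] by (intro min_coeff[of "{s..s}" "{s..n}"]) (use s in auto)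
  next
    case False
    then have "s - 1 = a (i - 1)"
      using a_pred_add[OF i(2)] alpha_gt_0[of i] i by (auto simp: s_def)
    then have "s - 2 = a (i - 1) - 1"
      by arith
    moreover have "2 \<le> i"
      using i by presburger
    ultimately have "ascends (s - 2)"
      using ascends_before_a[of i] i by simp
    then have P: "{1..s - 2} \<in> ideals alpha t"
      using s by (intro interval_ideal) auto
    have "{s..s} \<in> ideals alpha t" "{s..n} \<in> ideals alpha t"
      using s by (intro interval_ideal; auto)+
    then have "{1..s - 2} \<union> {s..s} \<in> ideals alpha t" "{1..s - 2} \<union> {s..n} \<in> ideals alpha t"
      using ideal_Un[OF P] by blast+
    moreover have "{1..s} \<in> ideals alpha t" "{1..n} \<in> ideals alpha t"
      using s by (intro interval_ideal; auto)+
    moreover have "insert (s - 1) ({1..s - 2} \<union> {s..s}) = {1..s}"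
      "insert (s - 1) ({1..s - 2} \<union> {s..n}) = {1..n}"
      using s by auto
    ultimately show ?thesis
      unfolding s_def[symmetric]
      by (intro min_coeff[of "{1..s - 2} \<union> {s..s}" "{1..s - 2} \<union> {s..n}"]) (use s in auto)
  qed
qed

lemma shared_coeff_eq_seg_avgs:
  assumes i: "1 \<le> i" "i < t"
  shows "b (a i) = seg_avg b i + seg_avg b (i + 1)"
proof -
  have i': "1 \<le> i + 1" "i + 1 \<le> t" "i \<le> t"
    using i by auto
  have ai: "a (i - 1) + alpha i = a i" "a i + alpha (i + 1) = a (i + 1)"
    using a_pred_add[OF i(1)] fa_Suc[of alpha i] by auto
  show ?thesis
  proof (cases "odd i")
    case True
    have "2 \<le> alpha i \<Longrightarrow> seg_pos i (alpha i - 1) = a i - 1"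
      "2 \<le> alpha (i + 1) \<Longrightarrow> seg_pos (i + 1) (alpha (i + 1) - 1) = a i + 1"
      using True ai by (auto simp: seg_pos_def)
    then show ?thesis
      using shared_max_relation[OF True i] toggle_coeff_shared_max[OF True i]
        seg_avg_ends[OF i(1) i'(3)] seg_avg_ends[OF i'(1,2)]
      by (auto split: if_splits)
  next
    case False
    have "seg_pos i 1 = a i - 1" "seg_pos (i + 1) 1 = a i + 1"
      using False by (auto simp: seg_pos_def)
    then show ?thesis
      using shared_min_relation[OF _ i] shared_min_coeff[OF _ i]
        seg_avg_ends[OF i(1) i'(3)] seg_avg_ends[OF i'(1,2)] False
      by (auto split: if_splits)
  qed
qed

lemma chi_comb_eq_basis_comb:
  assumes Y: "\<And>k. Y k = (if 1 \<le> k \<and> k \<le> t - 1 then X (a k) else 0)"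
  shows "(\<Sum>q\<in>F. b q * X q) =
    (\<Sum>i=1..t. \<Sum>x\<in>inner i. b x / real (alpha i) * (real (alpha i) * X x + Y (i - 1) + Y i))"
proof -
  have "(\<Sum>i=1..t. \<Sum>x\<in>inner i. b x / real (alpha i) * (real (alpha i) * X x + Y (i - 1) + Y i)) =
      (\<Sum>i=1..t. (\<Sum>x\<in>inner i. b x * X x) + seg_avg b i * (Y (i - 1) + Y i))"
  proof (intro sum.cong refl)
    fix i assume "i \<in> {1..t}"
    then have "real (alpha i) \<noteq> 0"
      using alpha_gt_0 by auto
    then have "b x / real (alpha i) * (real (alpha i) * X x + Y (i - 1) + Y i) =
        b x * X x + b x / real (alpha i) * (Y (i - 1) + Y i)" for x
      by (simp add: field_simps)
    then show "(\<Sum>x\<in>inner i. b x / real (alpha i) * (real (alpha i) * X x + Y (i - 1) + Y i)) =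
        (\<Sum>x\<in>inner i. b x * X x) + seg_avg b i * (Y (i - 1) + Y i)"
      by (simp add: sum.distrib seg_avg_def sum_divide_distrib sum_distrib_right)
  qed
  also have "\<dots> = (\<Sum>i=1..t. \<Sum>x\<in>inner i. b x * X x) + (\<Sum>k=1..t - 1. b (a k) * X (a k))"
  proof -
    have "(\<Sum>i=1..t. seg_avg b i * (Y (i - 1) + Y i)) =
        (\<Sum>k=1..t - 1. (seg_avg b k + seg_avg b (k + 1)) * Y k)"
      using sum_adjacent_pairs[of Y t "seg_avg b"] Y t_ge_2 by simp
    also have "\<dots> = (\<Sum>k=1..t - 1. b (a k) * X (a k))"
      using shared_coeff_eq_seg_avgs Y by (intro sum.cong) auto
    finally show ?thesis
      by (simp add: sum.distrib)
  qed
  finally show ?thesis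
    by (simp add: sum_fence_split)
qed

end

context fence_shape
begin

lemma AT_subset_span_BA: "AT alpha t \<subseteq> span (BA alpha t)"
proof
  fix f assume "f \<in> AT alpha t"
  then have "f \<in> span (chi alpha t ` F)" and "equiv_const alpha t f"
    by (auto simp: AT_def)
  obtain b where b: "f = (\<Sum>q\<in>F. b q *\<^sub>R chi alpha t q)"
    using span_image_coeffs[OF _ \<open>f \<in> span (chi alpha t ` F)\<close>] by (auto simp: fence_eq)
  then have f_eval: "f I = (\<Sum>q\<in>F. b q * chi alpha t q I)" for I
    by (simp add: sum_apply scaleR_fun_def)
  obtain c cq where "\<forall>I\<in>ideals alpha t. f I = c + (\<Sum>q\<in>F. cq q * toggle alpha t q I)"
    using \<open>equiv_const alpha t f\<close> unfolding equiv_const_def by auto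
  then interpret toggle_relation alpha t b cq c
    by unfold_locales (simp add: f_eval)
  have f_eq: "f = (\<Sum>i=1..t. \<Sum>x\<in>inner i. (b x / real (alpha i)) *\<^sub>R basis_elem i x)"
  proof
    fix I
    have "\<And>k. chi_s alpha t k I = (if 1 \<le> k \<and> k \<le> t - 1 then chi alpha t (a k) I else 0)"
      by (simp add: chi_s_def)
    then show "f I = (\<Sum>i=1..t. \<Sum>x\<in>inner i. (b x / real (alpha i)) *\<^sub>R basis_elem i x) I"
      using chi_comb_eq_basis_comb[of "\<lambda>k. chi_s alpha t k I" "\<lambda>q. chi alpha t q I"]
      by (simp add: f_eval sum_apply scaleR_fun_def basis_elem_def)
  qed
  show "f \<in> span (BA alpha t)"
    unfolding f_eq BA_eq by (intro span_sum span_scale span_base) blast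
qed

end

theorem theorem3p5:
  fixes alpha :: "nat \<Rightarrow> nat" and t :: nat
  assumes "t \<ge> 2"
    and "\<forall>i\<in>{1..t}. alpha i > 0"
    and "alpha 1 \<ge> 2" and "alpha t \<ge> 2"
  shows "independent (BA alpha t) \<and> span (BA alpha t) = AT alpha t \<and>
         dim (AT alpha t) = (\<Sum>i=1..t. alpha i - 1)"
proof -
  interpret fence_shape alpha t
    using assms by unfold_locales auto
  have span_eq: "span (BA alpha t) = AT alpha t"
    using span_BA_subset_AT AT_subset_span_BA by auto
  then have "dim (AT alpha t) = card (BA alpha t)"
    using dim_span_eq_card_independent[OF independent_BA] by simp
  then show ?thesis
    using independent_BA span_eq card_BA by simp
qed

end
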